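(* Let $0\le\alpha<\bar\alpha\le1$, $\eta\in(0,1]$ and $p\ge\frac1\eta$. Let $\gamma\in C([0,1],\mathbf T^2)$ with $|\gamma|_\alpha<\infty$ and $A\in\Omega$ with $|A|_{\mathrm{symm}\,\bar\alpha}+|A|_{\mathrm{gr}\eta}<\infty$. Then $$|\gamma_A|_{p\text{-var}}\le|A|_{\mathrm{gr}\eta}|\gamma|^\eta_{p\eta\text{-var}}+2^{\bar\alpha/\alpha}\zeta(\bar\alpha/\alpha)|A|_{\mathrm{symm}\,\bar\alpha}|\gamma|_\alpha^{\bar\alpha/\alpha}.$$
   Context: $E$ is a Banach space; $\mathbf T^2=[-\frac12,\frac12)^2$ with geodesic distance; $\mathcal X=\mathbf T^2\times\{|v|\le\frac14\}$; $\Omega$ is the space of measurable $A:\mathcal X\to E$ additive under concatenation of joinable collinear segments; $|A|_{\mathrm{gr}\eta}=\sup_{|\ell|>0}|A(\ell)|/|\ell|^\eta$; $|A|_{\mathrm{symm}\,\bar\alpha}=\sup|A(\partial P)-A(\partial\bar P)|/|P;\bar P|^{\bar\alpha/2}$ over triangles $P,\bar P$ (contained in sets of diameter $\le\frac14$), where $A(\partial P)$ is the sum of $A$ over the oriented sides and $|P;\bar P|$ is the area of the symmetric difference of their interiors if they have the same orientation and $|P|+|\bar P|$ otherwise. All paths have diameter $\le\frac14$. For a partition $D$ of $[0,1]$, $\gamma^D$ is the piecewise affine interpolation and $A(\gamma^D)$ the sum of $A$ over its pieces; $\gamma_A(t)=\lim_{|D|\to0}A(\gamma^D\restriction_{[0,t]})$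 (this limit exists under the hypotheses). With $P_{sut}$ the triangle formed by $\gamma(s),\gamma(u),\gamma(t)$, $|\gamma|_{[s,t]}=\sup_{u\in[s,t]}|P_{sut}|^{1/2}$ and $|\gamma|_\alpha=\sup_D\sum_{[a,b]\in D}|\gamma|^\alpha_{[a,b]}$. For a path $x$ in a metric space, $|x|^p_{p\text{-var}}=\sup_D\sum_{[s,t]\in D}d(x(s),x(t))^p$. *)

theory Defs
  imports "HOL-Analysis.Analysis"
begin

definition wrap :: "real \<Rightarrow> real" where
  "wrap r = r - of_int \<lfloor>r + 1/2\<rfloor>"

definition tproj :: "real^2 \<Rightarrow> real^2" where
  "tproj y = (\<chi> i. wrap (y $ i))"

definition torus :: "(real^2) set" where
  "torus = {x. \<forall>i. -1/2 \<le> x $ i \<and> x $ i < 1/2}"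

text \<open>Shortest displacement vector from x to y on the torus.\<close>
definition tdiff :: "real^2 \<Rightarrow> real^2 \<Rightarrow> real^2" where
  "tdiff y x = tproj (y - x)"

definition tdist :: "real^2 \<Rightarrow> real^2 \<Rightarrow> real" where
  "tdist x y = norm (tdiff y x)"

text \<open>A segment (x,v) starts at x and ends at x+v (mod 1); its length is norm v.\<close>
definition segs :: "((real^2) \<times> (real^2)) set" where
  "segs = torus \<times> cball 0 (1/4)"

definition Omega :: "((real^2) \<times> (real^2) \<Rightarrow> 'e::banach) set" where
  "Omega = {A. A \<in> borel_measurable (restrict_space borel segs) \<and>
     (\<forall>x v w. x \<in> torus \<and> (\<exists>u a b. 0 \<le> a \<and> 0 \<le> b \<and> v = a *\<^sub>R u \<and> w = b *\<^sub>R u)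
        \<and> norm (v + w) \<le> 1/4 \<longrightarrow> A (x, v + w) = A (x, v) + A (tproj (x + v), w))}"

definition epowr :: "ereal \<Rightarrow> real \<Rightarrow> ereal" where
  "epowr x a = (case x of ereal r \<Rightarrow> ereal (r powr a)
                 | PInfty \<Rightarrow> (if a > 0 then \<infinity> else if a = 0 then 1 else 0)
                 | MInfty \<Rightarrow> 0)"

text \<open>Real power with the standard convention x^0 = 1 (also for x = 0).\<close>
definition rpow :: "real \<Rightarrow> real \<Rightarrow> real" where
  "rpow x a = (if a = 0 then 1 else x powr a)"

definition eratio :: "real \<Rightarrow> real \<Rightarrow> ereal" where
  "eratio n d = (if d > 0 then ereal (n / d) else if n = 0 then 0 else \<infinity>)"

definition zeta_real :: "real \<Rightarrow> real" where
  "zeta_real s = (\<Sum>n. 1 / (real (Suc n)) powr s)"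

definition gr_norm :: "real \<Rightarrow> ((real^2) \<times> (real^2) \<Rightarrow> 'e::banach) \<Rightarrow> ereal" where
  "gr_norm \<eta> A = (SUP l \<in> {l \<in> segs. norm (snd l) > 0}.
        ereal (norm (A l) / norm (snd l) powr \<eta>))"

definition triangles :: "((real^2) \<times> (real^2) \<times> (real^2)) set" where
  "triangles = {(a,b,c). a \<in> torus \<and> b \<in> torus \<and> c \<in> torus \<and>
      tdist a b \<le> 1/4 \<and> tdist b c \<le> 1/4 \<and> tdist c a \<le> 1/4}"

definition det2 :: "real^2 \<Rightarrow> real^2 \<Rightarrow> real" where
  "det2 v w = v $ 1 * w $ 2 - v $ 2 * w $ 1"

definition tri_det :: "(real^2) \<times> (real^2) \<times> (real^2) \<Rightarrow> real" where
  "tri_det P = (case P of (a,b,c) \<Rightarrow> det2 (tdiff b a) (tdiff c a))"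

definition tri_area :: "(real^2) \<times> (real^2) \<times> (real^2) \<Rightarrow> real" where
  "tri_area P = \<bar>tri_det P\<bar> / 2"

definition tri_int :: "(real^2) \<times> (real^2) \<times> (real^2) \<Rightarrow> (real^2) set" where
  "tri_int P = (case P of (a,b,c) \<Rightarrow>
      tproj ` interior (convex hull {a, a + tdiff b a, a + tdiff c a}))"

definition tri_dist :: "(real^2) \<times> (real^2) \<times> (real^2) \<Rightarrow> (real^2) \<times> (real^2) \<times> (real^2) \<Rightarrow> real" where
  "tri_dist P Q = (if sgn (tri_det P) = sgn (tri_det Q)
      then measure lborel ((tri_int P - tri_int Q) \<union> (tri_int Q - tri_int P))
      else tri_area P + tri_area Q)"

definition bdry :: "((real^2) \<times> (real^2) \<Rightarrow> 'e::banach) \<Rightarrow> (real^2) \<times> (real^2) \<times> (real^2) \<Rightarrow> 'e" where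
  "bdry A P = (case P of (a,b,c) \<Rightarrow> A (a, tdiff b a) + A (b, tdiff c b) + A (c, tdiff a c))"

definition symm_norm :: "real \<Rightarrow> ((real^2) \<times> (real^2) \<Rightarrow> 'e::banach) \<Rightarrow> ereal" where
  "symm_norm \<alpha> A = (SUP PQ \<in> triangles \<times> triangles.
      eratio (norm (bdry A (fst PQ) - bdry A (snd PQ))) (tri_dist (fst PQ) (snd PQ) powr (\<alpha>/2)))"

definition partition01 :: "real list \<Rightarrow> bool" where
  "partition01 D \<longleftrightarrow> 2 \<le> length D \<and> hd D = 0 \<and> last D = 1 \<and> sorted_wrt (<) D"

definition intervals :: "real list \<Rightarrow> (real \<times> real) list" where
  "intervals D = zip D (tl D)"

definition mesh :: "real list \<Rightarrow> real" where
  "mesh D = Max (set (map (\<lambda>(a,b). b - a) (intervals D)))"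

definition pvar :: "('a \<Rightarrow> 'a \<Rightarrow> real) \<Rightarrow> (real \<Rightarrow> 'a) \<Rightarrow> real \<Rightarrow> ereal" where
  "pvar d x p = epowr (SUP D \<in> {D. partition01 D}.
      ereal (sum_list (map (\<lambda>(s,t). d (x s) (x t) powr p) (intervals D)))) (1/p)"

definition tri_size :: "(real \<Rightarrow> real^2) \<Rightarrow> real \<Rightarrow> real \<Rightarrow> real" where
  "tri_size \<gamma> s t = (SUP u \<in> {s..t}. sqrt (tri_area (\<gamma> s, \<gamma> u, \<gamma> t)))"

definition alpha_var :: "real \<Rightarrow> (real \<Rightarrow> real^2) \<Rightarrow> ereal" where
  "alpha_var \<alpha> \<gamma> = (SUP D \<in> {D. partition01 D}.
      ereal (sum_list (map (\<lambda>(a,b). rpow (tri_size \<gamma> a b) \<alpha>) (intervals D))))"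

text \<open>A applied to the piecewise affine interpolation gamma^D restricted to [0,t].\<close>
definition interp_sum :: "((real^2) \<times> (real^2) \<Rightarrow> 'e::banach) \<Rightarrow> (real \<Rightarrow> real^2) \<Rightarrow> real list \<Rightarrow> real \<Rightarrow> 'e" where
  "interp_sum A \<gamma> D t = sum_list (map (\<lambda>(a,b).
       if b \<le> t then A (\<gamma> a, tdiff (\<gamma> b) (\<gamma> a))
       else if a < t then A (\<gamma> a, ((t - a) / (b - a)) *\<^sub>R tdiff (\<gamma> b) (\<gamma> a))
       else 0) (intervals D))"

definition gammaA :: "((real^2) \<times> (real^2) \<Rightarrow> 'e::banach) \<Rightarrow> (real \<Rightarrow> real^2) \<Rightarrow> real \<Rightarrow> 'e" where
  "gammaA A \<gamma> t = (THE L. \<forall>\<epsilon>>0. \<exists>\<delta>>0. \<forall>D. partition01 D \<and> mesh D < \<delta> \<longrightarrow>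
       norm (interp_sum A \<gamma> D t - L) < \<epsilon>)"

definition torus_path :: "(real \<Rightarrow> real^2) \<Rightarrow> bool" where
  "torus_path \<gamma> \<longleftrightarrow> \<gamma> ` {0..1} \<subseteq> torus \<and>
     (\<forall>t\<in>{0..1}. \<forall>\<epsilon>>0. \<exists>\<delta>>0. \<forall>s\<in>{0..1}. \<bar>s - t\<bar> < \<delta> \<longrightarrow> tdist (\<gamma> s) (\<gamma> t) < \<epsilon>) \<and>
     (\<forall>s\<in>{0..1}. \<forall>t\<in>{0..1}. tdist (\<gamma> s) (\<gamma> t) \<le> 1/4)"

end

theory Submission
  imports Defs
begin

text \<open>
  Let \<omega>(s, t) be the supremum of the sums of |\<gamma>|_[a,b]^\<alpha> over partitions of [s, t]: a
  superadditive control, bounded by |\<gamma>|_\<alpha> and small on short intervals. Writing A(s, t) for A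
  on the chord from \<gamma>(s) to \<gamma>(t), the symmetric Hoelder bound gives the three-point estimate
  |A(s, u) + A(u, t) - A(s, t)| \<le> |A|_symm \<omega>(s, t)^\<theta> with \<theta> = \<alpha>'/\<alpha> > 1. Young's argument
  (repeatedly delete the point whose neighbours are closest in \<omega>) turns this into
  |\<Sigma>_F A(a, b) - A(s, t)| \<le> 2^\<theta> \<zeta>(\<theta>) |A|_symm \<omega>(s, t)^\<theta> for every partition F of [s, t].
  As \<omega> is small on short intervals, the interpolation sums are Cauchy as the mesh tends to 0,
  and in the limit
  |\<gamma>_A(t) - \<gamma>_A(s)| \<le> |A|_gr d(\<gamma>(s), \<gamma>(t))^\<eta> + 2^\<theta> \<zeta>(\<theta>) |A|_symm \<omega>(s, t)^\<theta>.
  Minkowski's inequality and \<Sigma> \<omega>^\<theta> \<le> (\<Sigma> \<omega>)^\<theta> \<le> |\<gamma>|_\<alpha>^\<theta> then give the p-variation bound.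
\<close>

section \<open>Sums over consecutive points of a partition\<close>

definition next_in :: "real set \<Rightarrow> real \<Rightarrow> real" where
  "next_in F x = Min {y\<in>F. x < y}"

definition chain_sum :: "(real \<Rightarrow> real \<Rightarrow> 'a::comm_monoid_add) \<Rightarrow> real set \<Rightarrow> 'a" where
  "chain_sum f F = (\<Sum>x\<in>F - {Max F}. f x (next_in F x))"

definition consecutive :: "real set \<Rightarrow> real \<Rightarrow> real \<Rightarrow> bool" where
  "consecutive F a b \<longleftrightarrow> a \<in> F \<and> b \<in> F \<and> a < b \<and> (\<forall>y\<in>F. y \<le> a \<or> b \<le> y)"

definition is_partition :: "real \<Rightarrow> real \<Rightarrow> real set \<Rightarrow> bool" where
  "is_partition a b F \<longleftrightarrow> finite F \<and> a \<in> F \<and> b \<in> F \<and> F \<subseteq> {a..b}"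

lemma consecutive_next_in:
  assumes "finite F" "x \<in> F" "x < Max F"
  shows "consecutive F x (next_in F x)"
proof -
  have fin: "finite {y\<in>F. x < y}" and ne: "Max F \<in> {y\<in>F. x < y}"
    using assms by (auto intro: Max_in)
  have "next_in F x \<in> {y\<in>F. x < y}"
    unfolding next_in_def using fin ne by (intro Min_in) auto
  moreover have "\<forall>y\<in>F. x < y \<longrightarrow> next_in F x \<le> y"
    using fin by (auto simp: next_in_def)
  ultimately show ?thesis
    unfolding consecutive_def using assms(2) by force
qed

lemma next_in_eqI:
  assumes "finite F" "consecutive F a b"
  shows "next_in F a = b"
  unfolding next_in_def using assms by (intro Min_eqI) (auto simp: consecutive_def)

lemma chain_sum_singleton [simp]: "chain_sum f {a} = 0"
  by (simp add: chain_sum_def)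

lemma chain_sum_pair:
  assumes "a < b"
  shows "chain_sum f {a, b} = f a b"
proof -
  have "next_in {a, b} a = b"
    using assms by (intro next_in_eqI) (auto simp: consecutive_def)
  then show ?thesis using assms by (simp add: chain_sum_def insert_Diff_if)
qed

lemma less_Max_if_ne: "finite F \<Longrightarrow> x \<in> F \<Longrightarrow> x \<noteq> Max F \<Longrightarrow> x < Max F"
  using Max_ge order.not_eq_order_implies_strict by blast

lemma chain_sum_cong:
  assumes "finite F" "\<And>a b. consecutive F a b \<Longrightarrow> f a b = f' a b"
  shows "chain_sum f F = chain_sum f' F"
  unfolding chain_sum_def using assms consecutive_next_in
  by (intro sum.cong) (auto simp: less_Max_if_ne)

lemma chain_sum_mono:
  fixes f f' :: "real \<Rightarrow> real \<Rightarrow> real"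
  assumes "finite F" "\<And>a b. consecutive F a b \<Longrightarrow> f a b \<le> f' a b"
  shows "chain_sum f F \<le> chain_sum f' F"
  unfolding chain_sum_def using assms consecutive_next_in
  by (intro sum_mono) (auto simp: less_Max_if_ne)

lemma chain_sum_nonneg:
  fixes f :: "real \<Rightarrow> real \<Rightarrow> real"
  shows "(\<And>a b. 0 \<le> f a b) \<Longrightarrow> 0 \<le> chain_sum f F"
  unfolding chain_sum_def by (rule sum_nonneg)

lemma norm_chain_sum_le: "norm (chain_sum f F) \<le> chain_sum (\<lambda>a b. norm (f a b)) F"
  unfolding chain_sum_def by (rule norm_sum)

lemma chain_sum_const_mult: "chain_sum (\<lambda>a b. c * f a b) F = c * (chain_sum f F :: real)"
  unfolding chain_sum_def by (simp add: sum_distrib_left)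

lemma chain_sum_split:
  assumes F: "finite F" and c: "c \<in> F"
  shows "chain_sum f F = chain_sum f {x\<in>F. x \<le> c} + chain_sum f {x\<in>F. c \<le> x}"
proof -
  define M where "M = Max F"
  have cM: "c \<le> M" using F c by (simp add: M_def)
  have MF: "M \<in> F" unfolding M_def using F c by (intro Max_in) auto
  have max_lower: "Max {x\<in>F. x \<le> c} = c" and max_upper: "Max {x\<in>F. c \<le> x} = M"
    using F c cM MF by (auto intro!: Max_eqI simp: M_def)
  have next_lower: "next_in {x\<in>F. x \<le> c} x = next_in F x" if "x \<in> F" "x < c" for x
  proof -
    have "consecutive F x (next_in F x)"
      using F that c by (intro consecutive_next_in) (auto intro: order.strict_trans2)
    then have "consecutive {x\<in>F. x \<le> c} x (next_in F x)"
      using c that by (auto simp: consecutive_def not_le[symmetric])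
    then show ?thesis using F by (simp add: next_in_eqI)
  qed
  have next_upper: "next_in {x\<in>F. c \<le> x} x = next_in F x" if "c \<le> x" for x
  proof -
    have "{y \<in> {x\<in>F. c \<le> x}. x < y} = {y\<in>F. x < y}" using that by auto
    then show ?thesis by (simp add: next_in_def)
  qed
  have split_set: "F - {M} = {x\<in>F. x < c} \<union> ({x\<in>F. c \<le> x} - {M})" using cM by auto
  have "chain_sum f F = (\<Sum>x\<in>{x\<in>F. x < c}. f x (next_in F x))
      + (\<Sum>x\<in>{x\<in>F. c \<le> x} - {M}. f x (next_in F x))"
    unfolding chain_sum_def M_def[symmetric] split_set using F by (intro sum.union_disjoint) auto
  also have "(\<Sum>x\<in>{x\<in>F. x < c}. f x (next_in F x)) = chain_sum f {x\<in>F. x \<le> c}"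
    unfolding chain_sum_def max_lower by (rule sum.cong) (auto simp: next_lower)
  also have "(\<Sum>x\<in>{x\<in>F. c \<le> x} - {M}. f x (next_in F x)) = chain_sum f {x\<in>F. c \<le> x}"
    unfolding chain_sum_def max_upper by (rule sum.cong) (auto simp: next_upper)
  finally show ?thesis .
qed

lemma chain_sum_split_consecutive:
  assumes F: "finite F" and pq: "consecutive F p q"
  shows "chain_sum f F = chain_sum f {x\<in>F. x \<le> p} + f p q + chain_sum f {x\<in>F. q \<le> x}"
proof -
  have "chain_sum f F = chain_sum f {x\<in>F. x \<le> p} + chain_sum f {x\<in>F. p \<le> x}"
    using F pq by (intro chain_sum_split) (auto simp: consecutive_def)
  also have "chain_sum f {x\<in>F. p \<le> x}
      = chain_sum f {y\<in>{x\<in>F. p \<le> x}. y \<le> q} + chain_sum f {y\<in>{x\<in>F. p \<le> x}. q \<le> y}"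
    using F pq by (intro chain_sum_split) (auto simp: consecutive_def)
  also have "{y\<in>{x\<in>F. p \<le> x}. y \<le> q} = {p, q}"
    using pq by (auto simp: consecutive_def intro: order.antisym)
  also have "{y\<in>{x\<in>F. p \<le> x}. q \<le> y} = {x\<in>F. q \<le> x}"
    using pq by (auto simp: consecutive_def)
  finally show ?thesis
    using pq by (simp add: chain_sum_pair consecutive_def add.assoc)
qed

lemma chain_sum_insert_Max:
  assumes "finite F" "F \<noteq> {}" "Max F < c"
  shows "chain_sum f (insert c F) = chain_sum f F + f (Max F) c"
proof -
  have "consecutive (insert c F) (Max F) c"
    using assms by (auto simp: consecutive_def)
  moreover have "{x\<in>insert c F. x \<le> Max F} = F"
    using assms by (auto simp del: Max_less_iff)
  moreover have "{x\<in>insert c F. c \<le> x} = {c}"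
    using assms by auto
  ultimately show ?thesis
    using assms by (simp add: chain_sum_split_consecutive)
qed

lemma chain_sum_insert_Min:
  assumes "finite F" "F \<noteq> {}" "c < Min F"
  shows "chain_sum f (insert c F) = f c (Min F) + chain_sum f F"
proof -
  have "consecutive (insert c F) c (Min F)"
    using assms by (auto simp: consecutive_def)
  moreover have "{x\<in>insert c F. x \<le> c} = {c}"
    using assms by auto
  moreover have "{x\<in>insert c F. Min F \<le> x} = F"
    using assms by (auto simp del: Min_gr_iff)
  ultimately show ?thesis
    using assms by (simp add: chain_sum_split_consecutive)
qed

lemma consecutive_around:
  assumes "finite F" "a \<in> F" "b \<in> F" "a < c" "c < b" "c \<notin> F"
  obtains p q where "consecutive F p q" "p < c" "c < q"
proof
  let ?p = "Max {x\<in>F. x < c}" and ?q = "Min {x\<in>F. c < x}"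
  have "?p \<in> {x\<in>F. x < c}" "?q \<in> {x\<in>F. c < x}"
    by (rule Max_in Min_in; use assms in auto)+
  moreover have "y \<le> ?p \<or> ?q \<le> y" if "y \<in> F" for y
  proof (cases "y < c")
    case True
    then show ?thesis using that assms by (intro disjI1 Max_ge) auto
  next
    case False
    then have "c < y" using that assms by (cases "y = c") auto
    then show ?thesis using that assms by (intro disjI2 Min_le) auto
  qed
  ultimately show "consecutive F ?p ?q" "?p < c" "c < ?q"
    by (auto simp: consecutive_def)
qed

lemma is_partition_last:
  assumes "is_partition s t F" "s < t"
  obtains m where "consecutive F m t"
proof
  let ?m = "Max (F - {t})"
  have "?m \<in> F - {t}" using assms by (intro Max_in) (auto simp: is_partition_def)
  moreover have "y \<le> ?m" if "y \<in> F" "y \<noteq> t" for y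
    using that assms by (intro Max_ge) (auto simp: is_partition_def)
  ultimately show "consecutive F ?m t"
    using assms by (auto simp: consecutive_def is_partition_def order.order_iff_strict)
qed

lemma is_partition_first:
  assumes "is_partition s t F" "s < t"
  obtains q where "consecutive F s q"
proof
  let ?q = "Min (F - {s})"
  have "?q \<in> F - {s}" using assms by (intro Min_in) (auto simp: is_partition_def)
  moreover have "?q \<le> y" if "y \<in> F" "y \<noteq> s" for y
    using that assms by (intro Min_le) (auto simp: is_partition_def)
  ultimately show "consecutive F s ?q"
    using assms by (auto simp: consecutive_def is_partition_def order.order_iff_strict)
qed

lemma chain_sum_snoc:
  assumes "is_partition s t F" "consecutive F m t"
  shows "chain_sum f F = chain_sum f {x\<in>F. x \<le> m} + f m t"
proof -
  have "{x\<in>F. t \<le> x} = {t}" using assms by (auto simp: is_partition_def consecutive_def)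
  then show ?thesis using assms by (simp add: chain_sum_split_consecutive is_partition_def)
qed

lemma chain_sum_cons:
  assumes "is_partition s t F" "consecutive F s q"
  shows "chain_sum f F = f s q + chain_sum f {x\<in>F. q \<le> x}"
proof -
  have "{x\<in>F. x \<le> s} = {s}" using assms by (auto simp: is_partition_def consecutive_def)
  then show ?thesis using assms by (simp add: chain_sum_split_consecutive is_partition_def)
qed

lemma is_partition_prefix:
  "is_partition s t F \<Longrightarrow> m \<in> F \<Longrightarrow> is_partition s m {x\<in>F. x \<le> m}"
  by (auto simp: is_partition_def)

lemma is_partition_suffix:
  "is_partition s t F \<Longrightarrow> m \<in> F \<Longrightarrow> is_partition m t {x\<in>F. m \<le> x}"
  by (auto simp: is_partition_def)

lemma is_partition_pair: "a \<le> b \<Longrightarrow> is_partition a b {a, b}"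
  by (auto simp: is_partition_def)

lemma is_partition_induct [consumes 1, case_names single snoc]:
  assumes "is_partition s t F"
    and single: "\<And>s. P s s {s}"
    and snoc: "\<And>s m t F. is_partition s t F \<Longrightarrow> consecutive F m t
       \<Longrightarrow> P s m {x\<in>F. x \<le> m} \<Longrightarrow> P s t F"
  shows "P s t F"
  using assms(1)
proof (induction "card F" arbitrary: t F rule: less_induct)
  case less
  show ?case
  proof (cases "s = t")
    case True
    then have "F = {s}" using less.prems by (auto simp: is_partition_def)
    then show ?thesis using single True by simp
  next
    case False
    then have "s < t" using less.prems by (auto simp: is_partition_def)
    then obtain m where m: "consecutive F m t" using is_partition_last less.prems by blast
    have "t \<in> F - {x\<in>F. x \<le> m}"
      using less.prems m by (auto simp: is_partition_def consecutive_def)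
    then have "card {x\<in>F. x \<le> m} < card F"
      using less.prems by (intro psubset_card_mono) (auto simp: is_partition_def)
    moreover have "is_partition s m {x\<in>F. x \<le> m}"
      using less.prems m by (intro is_partition_prefix) (auto simp: consecutive_def)
    ultimately show ?thesis using less m snoc by blast
  qed
qed

lemma chain_sum_union:
  assumes "is_partition a c F1" "is_partition c b F2"
  shows "chain_sum f (F1 \<union> F2) = chain_sum f F1 + chain_sum f F2"
proof -
  have "{x\<in>F1 \<union> F2. x \<le> c} = F1" "{x\<in>F1 \<union> F2. c \<le> x} = F2"
    using assms by (auto simp: is_partition_def)
  then show ?thesis
    using assms chain_sum_split[of "F1 \<union> F2" c f] by (simp add: is_partition_def)
qed

lemma is_partition_union:
  assumes "is_partition a c F1" "is_partition c b F2"
  shows "is_partition a b (F1 \<union> F2)"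
proof -
  have "a \<le> c" "c \<le> b" using assms by (auto simp: is_partition_def)
  then have "{a..c} \<union> {c..b} \<subseteq> {a..b}" by auto
  then show ?thesis using assms unfolding is_partition_def by blast
qed

lemma chain_sum_restrict_le:
  fixes f :: "real \<Rightarrow> real \<Rightarrow> real"
  assumes "\<And>x y. 0 \<le> f x y" "finite F" "a \<in> F" "b \<in> F" "a \<le> b"
  shows "chain_sum f {x\<in>F. a \<le> x \<and> x \<le> b} \<le> chain_sum f F"
proof -
  have "chain_sum f F = chain_sum f {x\<in>F. x \<le> a} + chain_sum f {x\<in>F. a \<le> x}"
    using assms by (intro chain_sum_split) auto
  also have "chain_sum f {x\<in>F. a \<le> x}
      = chain_sum f {y\<in>{x\<in>F. a \<le> x}. y \<le> b} + chain_sum f {y\<in>{x\<in>F. a \<le> x}. b \<le> y}"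
    using assms by (intro chain_sum_split) auto
  also have "{y\<in>{x\<in>F. a \<le> x}. y \<le> b} = {x\<in>F. a \<le> x \<and> x \<le> b}" by auto
  finally show ?thesis
    using chain_sum_nonneg[of f "{x\<in>F. x \<le> a}", OF assms(1)]
      chain_sum_nonneg[of f "{y\<in>{x\<in>F. a \<le> x}. b \<le> y}", OF assms(1)]
    by linarith
qed

lemma chain_sum_diff: "chain_sum (\<lambda>a b. f a b - g a b) F = chain_sum f F - (chain_sum g F :: 'a::ab_group_add)"
  by (simp add: chain_sum_def sum_subtractf)

lemma chain_sum_refine:
  assumes "is_partition s t F" "is_partition s t R" "F \<subseteq> R"
  shows "chain_sum f R = chain_sum (\<lambda>a b. chain_sum f {x\<in>R. a \<le> x \<and> x \<le> b}) F"
  using assms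
proof (induction arbitrary: R rule: is_partition_induct)
  case (single s)
  then have "R = {s}" by (auto simp: is_partition_def)
  then show ?case by simp
next
  case (snoc s m t F)
  let ?g = "\<lambda>R a b. chain_sum f {x\<in>R. a \<le> x \<and> x \<le> b}"
  have fin: "finite F" "finite R" and m: "m \<in> R" "m < t"
    using snoc by (auto simp: is_partition_def consecutive_def)
  have "chain_sum f R = chain_sum f {x\<in>R. x \<le> m} + chain_sum f {x\<in>R. m \<le> x}"
    using fin m by (intro chain_sum_split) auto
  also have "chain_sum f {x\<in>R. x \<le> m} = chain_sum (?g {x\<in>R. x \<le> m}) {x\<in>F. x \<le> m}"
    using snoc m by (intro snoc.IH is_partition_prefix) auto
  also have "\<dots> = chain_sum (?g R) {x\<in>F. x \<le> m}"
    using fin by (intro chain_sum_cong) (auto simp: consecutive_def intro!: arg_cong[of _ _ "chain_sum f"])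
  also have "{x\<in>R. m \<le> x} = {x\<in>R. m \<le> x \<and> x \<le> t}"
    using snoc.prems by (auto simp: is_partition_def)
  finally show ?case using chain_sum_snoc[OF snoc.hyps(1,2), of "?g R"] by simp
qed

lemma sorted_hd_le_le_last:
  fixes xs :: "real list"
  assumes "sorted_wrt (<) xs" "y \<in> set xs"
  shows "hd xs \<le> y \<and> y \<le> last xs"
  using assms
proof (induction xs)
  case (Cons x xs)
  then show ?case
    by (cases "xs = []") (auto simp: less_imp_le dest: bspec[of _ _ "last xs"])
qed simp

lemma in_set_intervals_iff:
  assumes D: "sorted_wrt (<) D"
  shows "(a, b) \<in> set (intervals D) \<longleftrightarrow> consecutive (set D) a b"
proof -
  have mono: "D ! i \<le> D ! j" if "i \<le> j" "j < length D" for i j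
    using D that by (auto simp: strict_sorted_iff intro: sorted_nth_mono)
  show ?thesis
  proof
  assume "(a, b) \<in> set (intervals D)"
  then obtain i where "i < length (tl D)" "a = D ! i" "b = tl D ! i"
    unfolding intervals_def in_set_zip by auto
  then have i: "Suc i < length D" "a = D ! i" "b = D ! Suc i"
    by (auto simp: nth_tl)
  have "y \<le> a \<or> b \<le> y" if "y \<in> set D" for y
  proof -
    obtain j where "j < length D" "y = D ! j" using \<open>y \<in> set D\<close> by (auto simp: in_set_conv_nth)
    then show ?thesis using i mono[of j i] mono[of "Suc i" j] by (cases "j \<le> i") auto
  qed
  then show "consecutive (set D) a b"
    using i D by (auto simp: consecutive_def sorted_wrt_nth_less)
next
  assume ab: "consecutive (set D) a b"
  obtain i j where ij: "i < length D" "a = D ! i" "j < length D" "b = D ! j"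
    using ab by (auto simp: consecutive_def in_set_conv_nth)
  have "\<not> j \<le> i" using ab ij mono[of j i] by (auto simp: consecutive_def)
  moreover have "\<not> Suc i < j"
  proof
    assume "Suc i < j"
    then have "a < D ! Suc i" "D ! Suc i < b"
      using D ij by (auto simp: sorted_wrt_nth_less)
    moreover have "D ! Suc i \<in> set D" using ij \<open>Suc i < j\<close> by simp
    ultimately show False using ab by (force simp: consecutive_def)
  qed
  ultimately have "j = Suc i" by simp
  then show "(a, b) \<in> set (intervals D)"
    using ij by (auto simp: intervals_def in_set_zip nth_tl intro!: exI[of _ i])
  qed
qed

lemma sum_list_intervals_eq_chain_sum:
  assumes "sorted_wrt (<) D" "D \<noteq> []"
  shows "sum_list (map (\<lambda>(a, b). f a b) (intervals D)) = chain_sum f (set D)"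
  using assms
proof (induction D)
  case (Cons x D)
  show ?case
  proof (cases D)
    case Nil
    then show ?thesis by (simp add: intervals_def)
  next
    case (Cons y D')
    have "Min (set D) = y"
      using Cons.prems Cons by (intro Min_eqI) (auto simp: less_imp_le)
    moreover have "x < y" using Cons.prems Cons by simp
    ultimately have "chain_sum f (set (x # D)) = f x y + chain_sum f (set D)"
      using chain_sum_insert_Min[of "set D" x f] Cons by simp
    moreover have "intervals (x # D) = (x, y) # intervals D"
      using Cons by (simp add: intervals_def)
    ultimately show ?thesis using Cons.IH Cons.prems Cons by simp
  qed
qed simp

lemma sum_list_intervals_conv_sum_nth:
  "sum_list (map (\<lambda>(a, b). f a b) (intervals xs)) = (\<Sum>i<length xs - 1. f (xs ! i) (xs ! Suc i))"
proof (induction xs)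
  case (Cons a xs)
  then show ?case
    by (cases xs) (simp_all add: intervals_def sum.lessThan_Suc_shift del: sum.lessThan_Suc)
qed (simp add: intervals_def)

lemma partition01_is_partition:
  assumes "partition01 D"
  shows "is_partition 0 1 (set D)"
proof -
  have D: "D \<noteq> []" "hd D = 0" "last D = 1" "sorted_wrt (<) D"
    using assms by (auto simp: partition01_def)
  then show ?thesis
    using sorted_hd_le_le_last[OF D(4)] hd_in_set[OF D(1)] last_in_set[OF D(1)]
    by (auto simp: is_partition_def)
qed

lemma partition01_sorted: "partition01 D \<Longrightarrow> sorted_wrt (<) D"
  by (simp add: partition01_def)

lemma partition01_nonempty: "partition01 D \<Longrightarrow> D \<noteq> []"
  by (auto simp: partition01_def)

lemma partition01_of_set:
  assumes "is_partition 0 1 F"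
  obtains D where "partition01 D" "set D = F"
proof -
  obtain D where D: "sorted_wrt (<) D" "set D = F"
    using assms finite_set_strict_sorted[of F] unfolding is_partition_def by blast
  have "card {0, 1::real} \<le> card F"
    using assms by (intro card_mono) (auto simp: is_partition_def)
  then have "2 \<le> length D"
    using D distinct_card[of D] by (simp add: strict_sorted_iff)
  then have "D \<noteq> []" by auto
  have "hd D = 0" "last D = 1"
    using sorted_hd_le_le_last[OF D(1)] D(2) assms hd_in_set[OF \<open>D \<noteq> []\<close>] last_in_set[OF \<open>D \<noteq> []\<close>]
    by (auto simp: is_partition_def intro!: order.antisym)
  then show ?thesis using D that \<open>2 \<le> length D\<close> by (simp add: partition01_def)
qed

lemma consecutive_le_mesh:
  assumes "partition01 D" "consecutive (set D) a b"
  shows "b - a \<le> mesh D"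
proof -
  have "(a, b) \<in> set (intervals D)"
    using assms by (simp add: in_set_intervals_iff partition01_sorted)
  then show ?thesis unfolding mesh_def by (intro Max_ge) force+
qed

lemma mesh_less:
  assumes "partition01 D" "\<And>a b. consecutive (set D) a b \<Longrightarrow> b - a < \<delta>"
  shows "mesh D < \<delta>"
proof -
  have "intervals D \<noteq> []"
    using assms(1) by (cases D; cases "tl D") (auto simp: intervals_def partition01_def)
  then show ?thesis
    using assms unfolding mesh_def
    by (subst Max_less_iff) (auto simp: in_set_intervals_iff partition01_sorted)
qed

text \<open>The grid of mesh 1/N, refined by the given points E, is fine enough.\<close>
lemma fine_partition_exists:
  assumes "0 < \<delta>" "finite E" "E \<subseteq> {0..1}"
  obtains D where "partition01 D" "mesh D < \<delta>" "E \<subseteq> set D"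
proof -
  obtain N :: nat where N: "1 / \<delta> < real N" using reals_Archimedean2 by blast
  moreover have "0 < 1 / \<delta>" using assms(1) by simp
  ultimately have N_pos: "0 < real N" by linarith
  have "1 / real N < \<delta>" using N assms(1) N_pos by (simp add: field_simps)
  define F where "F = E \<union> (\<lambda>k. real k / real N) ` {0..N}"
  have "real 0 / real N \<in> F" "real N / real N \<in> F" by (auto simp: F_def)
  then have "is_partition 0 1 F"
    using assms N_pos by (auto simp: F_def is_partition_def)
  then obtain D where D: "partition01 D" "set D = F" by (rule partition01_of_set)
  have "b - a < \<delta>" if ab: "consecutive F a b" for a b
  proof -
    have a: "0 \<le> a" "a < 1" using ab \<open>is_partition 0 1 F\<close> by (auto simp: consecutive_def is_partition_def)
    define k where "k = nat \<lfloor>a * real N\<rfloor> + 1"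
    have "real k = real_of_int \<lfloor>a * real N\<rfloor> + 1" using a N_pos by (simp add: k_def)
    then have k: "a * real N < real k" "real k \<le> a * real N + 1"
      by linarith+
    moreover have "a * real N < real N" using a N_pos by simp
    ultimately have "k \<le> N" by linarith
    then have "real k / real N \<in> F" by (auto simp: F_def)
    moreover have "a < real k / real N" "real k / real N \<le> a + 1 / real N"
      using k N_pos by (auto simp: field_simps)
    ultimately have "b \<le> a + 1 / real N" using ab by (force simp: consecutive_def)
    then show ?thesis using \<open>1 / real N < \<delta>\<close> by simp
  qed
  then have "mesh D < \<delta>" using D by (intro mesh_less) auto
  then show ?thesis using that D by (auto simp: F_def)
qed

lemma compact_Lebesgue_number:
  fixes S :: "'a::metric_space set"
  assumes "compact S" "\<And>x. x \<in> S \<Longrightarrow> 0 < r x"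
  obtains e where "0 < e" "\<And>s t. s \<in> S \<Longrightarrow> dist s t < e \<Longrightarrow> \<exists>x\<in>S. dist x s < r x \<and> dist x t < r x"
proof -
  have "S \<subseteq> \<Union> ((\<lambda>x. ball x (r x)) ` S)"
    using assms(2) by force
  then obtain e where e: "0 < e" "\<And>s. s \<in> S \<Longrightarrow> \<exists>B \<in> (\<lambda>x. ball x (r x)) ` S. ball s e \<subseteq> B"
    using Heine_Borel_lemma[OF assms(1)] by blast
  show ?thesis
  proof (rule that[OF e(1)])
    fix s t assume "s \<in> S" "dist s t < e"
    then obtain x where "x \<in> S" "ball s e \<subseteq> ball x (r x)" using e(2) by blast
    moreover have "s \<in> ball s e" "t \<in> ball s e" using \<open>dist s t < e\<close> e(1) by auto
    ultimately have "x \<in> S" "s \<in> ball x (r x)" "t \<in> ball x (r x)" by blast+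
    then show "\<exists>x\<in>S. dist x s < r x \<and> dist x t < r x" by auto
  qed
qed

lemma powr_le_powr_sub_1_mult:
  fixes w e p :: real
  assumes "0 \<le> w" "w \<le> e" "1 \<le> p"
  shows "w powr p \<le> e powr (p - 1) * w"
proof (cases "w = 0")
  case False
  have "w powr p = w powr ((p - 1) + 1)" by simp
  also have "\<dots> = w powr (p - 1) * w powr 1" by (rule powr_add)
  also have "\<dots> = w powr (p - 1) * w" using assms by simp
  also have "\<dots> \<le> e powr (p - 1) * w"
    using assms False by (intro mult_right_mono powr_mono2) auto
  finally show ?thesis .
qed simp

lemma exists_small_powr:
  fixes c r \<epsilon> :: real
  assumes "0 \<le> c" "0 < r" "0 < \<epsilon>"
  obtains e where "0 < e" "c * e powr r \<le> \<epsilon>"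
proof
  let ?e = "(\<epsilon> / (c + 1)) powr (1 / r)"
  show "0 < ?e" using assms by simp
  have "c * ?e powr r = c * (\<epsilon> / (c + 1))" using assms by (simp add: powr_powr)
  also have "\<dots> \<le> \<epsilon>" using assms by (simp add: field_simps)
  finally show "c * ?e powr r \<le> \<epsilon>" .
qed

lemma strict_chain_le:
  fixes x :: "nat \<Rightarrow> real"
  assumes "\<forall>i<n. x i < x (Suc i)" "i \<le> j" "j \<le> n"
  shows "x i \<le> x j"
  using assms(2,3)
proof (induction j)
  case (Suc j)
  show ?case
  proof (cases "i = Suc j")
    case False
    then have "x i \<le> x j" using Suc by simp
    also have "x j \<le> x (Suc j)" using assms(1) Suc.prems by (auto intro: less_imp_le)
    finally show ?thesis .
  qed simp
qed simp

lemma exists_le_average: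
  fixes f :: "'a \<Rightarrow> real"
  assumes "finite J" "J \<noteq> {}"
  obtains j where "j \<in> J" "f j * card J \<le> sum f J"
proof (rule ccontr)
  assume "\<not> thesis"
  note average = that
  have "sum f J < f j * card J" if "j \<in> J" for j
    using \<open>\<not> thesis\<close> average[OF that] not_le by blast
  then have "(\<Sum>j\<in>J. sum f J) < (\<Sum>j\<in>J. f j * card J)"
    using assms by (intro sum_strict_mono) auto
  then show False by (simp add: sum_distrib_right mult.commute)
qed

lemma sum_remove_point:
  fixes F :: "'b \<Rightarrow> 'b \<Rightarrow> 'a::ab_group_add" and x :: "nat \<Rightarrow> 'b" and j m :: nat
  defines "y \<equiv> \<lambda>i. if i \<le> j then x i else x (Suc i)"
  assumes "j < m"
  shows "(\<Sum>i<Suc m. F (x i) (x (Suc i))) = (\<Sum>i<m. F (y i) (y (Suc i)))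
    + (F (x j) (x (Suc j)) + F (x (Suc j)) (x (Suc (Suc j))) - F (x j) (x (Suc (Suc j))))"
proof -
  obtain k where k: "m = Suc j + k" using assms(2) less_imp_Suc_add by blast
  have "(\<Sum>i<Suc (Suc j) + k. F (x i) (x (Suc i))) = (\<Sum>i<Suc j + k. F (y i) (y (Suc i)))
    + (F (x j) (x (Suc j)) + F (x (Suc j)) (x (Suc (Suc j))) - F (x j) (x (Suc (Suc j))))"
  proof (induction k)
    case 0
    have "(\<Sum>i<j. F (y i) (y (Suc i))) = (\<Sum>i<j. F (x i) (x (Suc i)))"
      by (rule sum.cong) (auto simp: y_def)
    then show ?case by (simp add: y_def)
  next
    case (Suc k)
    then show ?case by (simp add: y_def algebra_simps)
  qed
  then show ?thesis using k by (simp del: sum.lessThan_Suc)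
qed

lemma strict_chain_remove_point:
  fixes x :: "nat \<Rightarrow> real" and j m :: nat
  defines "y \<equiv> \<lambda>i. if i \<le> j then x i else x (Suc i)"
  assumes x: "\<forall>i<Suc m. x i < x (Suc i)" and "j < m"
  shows "\<forall>i<m. y i < y (Suc i)"
proof (intro allI impI)
  fix i assume "i < m"
  consider "i < j" | "i = j" | "j < i" by linarith
  then show "y i < y (Suc i)"
    using x[rule_format, of i] x[rule_format, of "Suc i"] \<open>i < m\<close> by cases (auto simp: y_def)
qed

lemma zeta_real_partial_le:
  assumes "1 < s"
  shows "(\<Sum>k=1..N. 1 / real k powr s) \<le> zeta_real s"
proof -
  have "summable (\<lambda>n. real (Suc n) powr (- s))"
    using assms summable_real_powr_iff[of "-s"] by (subst summable_Suc_iff) simp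
  then have summable: "summable (\<lambda>n. 1 / real (Suc n) powr s)"
    by (simp add: powr_minus_divide)
  have "(\<Sum>k=1..N. 1 / real k powr s) = (\<Sum>i<N. 1 / real (Suc i) powr s)"
    by (rule sum.reindex_bij_witness[of _ Suc "\<lambda>k. k - 1"]) auto
  also have "\<dots> \<le> zeta_real s"
    unfolding zeta_real_def by (rule sum_le_suminf[OF summable]) auto
  finally show ?thesis .
qed

lemma zeta_real_nonneg: "1 < s \<Longrightarrow> 0 \<le> zeta_real s"
  using zeta_real_partial_le[of s 0] by simp

lemma sum_powr_le_powr_sum:
  fixes b :: "'a \<Rightarrow> real"
  assumes "finite I" "\<And>i. i \<in> I \<Longrightarrow> 0 \<le> b i" "1 \<le> p"
  shows "(\<Sum>i\<in>I. b i powr p) \<le> (\<Sum>i\<in>I. b i) powr p"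
proof -
  let ?B = "\<Sum>i\<in>I. b i"
  have "b i \<le> ?B" if "i \<in> I" for i using assms that by (intro member_le_sum) auto
  then have "(\<Sum>i\<in>I. b i powr p) \<le> (\<Sum>i\<in>I. ?B powr (p - 1) * b i)"
    using assms by (intro sum_mono powr_le_powr_sub_1_mult) auto
  also have "\<dots> = ?B powr (p - 1) * ?B" by (simp add: sum_distrib_left)
  also have "\<dots> = ?B powr p"
  proof (cases "?B = 0")
    case False
    moreover have "0 \<le> ?B" using assms by (simp add: sum_nonneg)
    ultimately show ?thesis by (simp add: powr_diff)
  qed simp
  finally show ?thesis .
qed

lemma powr_convex_nonneg:
  fixes x y t p :: real
  assumes "1 \<le> p" "0 \<le> x" "0 \<le> y" "0 \<le> t" "t \<le> 1"
  shows "((1 - t) * x + t * y) powr p \<le> (1 - t) * x powr p + t * y powr p"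
proof -
  have small_weight: "(c * z) powr p \<le> c * z powr p" if "0 \<le> c" "c \<le> 1" "0 \<le> z" for c z :: real
  proof (cases "c = 0")
    case False
    then have "c powr p \<le> c" using that assms(1) by (intro powr_le_one_le) auto
    then show ?thesis using that by (simp add: powr_mult mult_right_mono)
  qed simp
  consider "x = 0" | "y = 0" | "0 < x" "0 < y" using assms by linarith
  then show ?thesis
  proof cases
    case 1
    then show ?thesis using small_weight[of t y] assms by simp
  next
    case 2
    then show ?thesis using small_weight[of "1 - t" x] assms by simp
  next
    case 3
    then show ?thesis
      using convex_onD[OF powr_convex[OF assms(1)], of t x y] assms by simp
  qed
qed

lemma sum_powr_normalized:
  fixes a :: "'a \<Rightarrow> real"
  assumes "\<And>i. i \<in> I \<Longrightarrow> 0 \<le> a i" "0 < p" "0 < (\<Sum>i\<in>I. a i powr p) powr (1/p)"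
  shows "(\<Sum>i\<in>I. (a i / (\<Sum>i\<in>I. a i powr p) powr (1/p)) powr p) = 1"
proof -
  let ?S = "\<Sum>i\<in>I. a i powr p"
  have "0 < ?S" using assms(3) sum_nonneg[of I "\<lambda>i. a i powr p"] by (cases "?S = 0") auto
  then have "(?S powr (1/p)) powr p = ?S" using assms(2) by (simp add: powr_powr)
  then show ?thesis
    using assms \<open>0 < ?S\<close> by (simp add: powr_divide sum_divide_distrib[symmetric])
qed

text \<open>The normalised vectors a / |a|_p and b / |b|_p have p-norm 1, and (a + b) / (|a|_p + |b|_p)
  is a convex combination of them.\<close>
lemma sum_powr_le_powr_add_norms:
  fixes a b :: "'a \<Rightarrow> real" and I :: "'a set" and p :: real
  defines "NA \<equiv> (\<Sum>i\<in>I. a i powr p) powr (1/p)" and "NB \<equiv> (\<Sum>i\<in>I. b i powr p) powr (1/p)"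
  assumes ab: "\<And>i. i \<in> I \<Longrightarrow> 0 \<le> a i" "\<And>i. i \<in> I \<Longrightarrow> 0 \<le> b i" and p: "1 \<le> p"
    and pos: "0 < NA" "0 < NB"
  shows "(\<Sum>i\<in>I. (a i + b i) powr p) \<le> (NA + NB) powr p"
proof -
  define t where "t = NB / (NA + NB)"
  have t: "0 \<le> t" "t \<le> 1" "1 - t = NA / (NA + NB)" using pos by (auto simp: t_def field_simps)
  have "(\<Sum>i\<in>I. ((a i + b i) / (NA + NB)) powr p)
      \<le> (\<Sum>i\<in>I. (1 - t) * (a i / NA) powr p + t * (b i / NB) powr p)"
  proof (rule sum_mono)
    fix i assume "i \<in> I"
    have "(1 - t) * (a i / NA) = a i / (NA + NB)" "t * (b i / NB) = b i / (NA + NB)"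
      using pos t(3) by (simp_all add: t_def)
    then have "(a i + b i) / (NA + NB) = (1 - t) * (a i / NA) + t * (b i / NB)"
      by (simp add: add_divide_distrib)
    then show "((a i + b i) / (NA + NB)) powr p \<le> (1 - t) * (a i / NA) powr p + t * (b i / NB) powr p"
      using powr_convex_nonneg[OF p, of "a i / NA" "b i / NB" t] pos t ab \<open>i \<in> I\<close> by simp
  qed
  also have "\<dots> = 1"
    using sum_powr_normalized[of I a p] sum_powr_normalized[of I b p] ab p pos
    by (simp add: sum.distrib sum_distrib_left[symmetric] NA_def NB_def)
  finally show ?thesis
    using pos ab by (simp add: powr_divide sum_divide_distrib[symmetric] add_nonneg_nonneg)
qed

lemma minkowski_inequality_sum:
  fixes a b :: "'a \<Rightarrow> real"
  assumes I: "finite I" and ab: "\<And>i. i \<in> I \<Longrightarrow> 0 \<le> a i" "\<And>i. i \<in> I \<Longrightarrow> 0 \<le> b i" and p: "1 \<le> p"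
  shows "(\<Sum>i\<in>I. (a i + b i) powr p) powr (1/p)
    \<le> (\<Sum>i\<in>I. a i powr p) powr (1/p) + (\<Sum>i\<in>I. b i powr p) powr (1/p)"
proof -
  let ?N = "\<lambda>f. (\<Sum>i\<in>I. f i powr p) powr (1/p)"
  have vanish: "f i = 0" if "?N f = 0" "i \<in> I" "\<And>i. i \<in> I \<Longrightarrow> 0 \<le> f i" for f :: "'a \<Rightarrow> real" and i
    using that I sum_nonneg_eq_0_iff[of I "\<lambda>i. f i powr p"] by auto
  have "0 \<le> ?N a" "0 \<le> ?N b" by simp_all
  then consider "?N a = 0" | "?N b = 0" | "0 < ?N a" "0 < ?N b" by (auto simp: le_less)
  then show ?thesis
  proof cases
    case 1
    then have "a i = 0" if "i \<in> I" for i using vanish[of a i] ab that by simp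
    then show ?thesis using 1 by simp
  next
    case 2
    then have "b i = 0" if "i \<in> I" for i using vanish[of b i] ab that by simp
    then show ?thesis using 2 by simp
  next
    case 3
    then have "(\<Sum>i\<in>I. (a i + b i) powr p) powr (1/p) \<le> ((?N a + ?N b) powr p) powr (1/p)"
      using sum_powr_le_powr_add_norms[where a=a and b=b and I=I and p=p] ab p by (intro powr_mono2) (auto intro!: sum_nonneg)
    then show ?thesis using 3 p by (simp add: powr_powr)
  qed
qed

lemma epowr_ereal: "epowr (ereal r) a = ereal (r powr a)"
  by (simp add: epowr_def)

lemma epowr_mono:
  assumes "0 \<le> a" "0 \<le> x" "x \<le> y"
  shows "epowr x a \<le> epowr y a"
proof (cases y)
  case (real s)
  then obtain r where "x = ereal r" "0 \<le> r" "r \<le> s" using assms by (cases x) auto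
  then show ?thesis using real assms by (simp add: epowr_ereal powr_mono2)
next
  case PInf
  then show ?thesis
    using assms by (cases x) (auto simp: epowr_def powr_le1)
qed (use assms in auto)

lemma pvar_le:
  assumes p: "0 < p"
    and bound: "\<And>D. partition01 D \<Longrightarrow>
      ereal ((sum_list (map (\<lambda>(s, t). d (x s) (x t) powr p) (intervals D))) powr (1/p)) \<le> B"
  shows "pvar d x p \<le> B"
proof -
  let ?sum = "\<lambda>D. sum_list (map (\<lambda>(s, t). d (x s) (x t) powr p) (intervals D))"
  have nonneg: "0 \<le> ?sum D" for D by (intro sum_list_nonneg) auto
  have "partition01 [0, 1]" by (simp add: partition01_def)
  then have "ereal (?sum [0, 1] powr (1/p)) \<le> B" by (rule bound)
  then have "0 \<le> B" by (rule order_trans[rotated]) simp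
  then obtain b where "B = \<infinity> \<or> (B = ereal b \<and> 0 \<le> b)" by (cases B) auto
  then show ?thesis
  proof (elim disjE conjE)
    assume B: "B = ereal b" "0 \<le> b"
    have "?sum D \<le> b powr p" if "partition01 D" for D
    proof -
      have "?sum D = (?sum D powr (1/p)) powr p" using p nonneg[of D] by (simp add: powr_powr)
      also have "\<dots> \<le> b powr p" using bound[OF that] B p by (intro powr_mono2) auto
      finally show ?thesis .
    qed
    then have "(SUP D\<in>{D. partition01 D}. ereal (?sum D)) \<le> ereal (b powr p)"
      by (intro SUP_least) auto
    moreover have "0 \<le> (SUP D\<in>{D. partition01 D}. ereal (?sum D))"
      using \<open>partition01 [0, 1]\<close> nonneg by (intro SUP_upper2[of "[0, 1]"]) auto
    ultimately have "pvar d x p \<le> epowr (ereal (b powr p)) (1/p)"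
      unfolding pvar_def using p by (intro epowr_mono) auto
    then show ?thesis using B p by (simp add: epowr_ereal powr_powr)
  qed simp
qed

lemma ereal_le_mult_epowr_pvar:
  assumes "0 \<le> G" "0 < \<eta>" "0 < q" "partition01 D"
  shows "ereal (G * (sum_list (map (\<lambda>(s, t). d (x s) (x t) powr q) (intervals D))) powr (\<eta> / q))
    \<le> ereal G * epowr (pvar d x q) \<eta>"
proof -
  let ?sum = "sum_list (map (\<lambda>(s, t). d (x s) (x t) powr q) (intervals D))"
  have "0 \<le> ?sum" by (intro sum_list_nonneg) auto
  have "ereal ?sum \<le> (SUP D\<in>{D. partition01 D}. ereal (sum_list (map (\<lambda>(s, t). d (x s) (x t) powr q) (intervals D))))"
    using assms(4) by (intro SUP_upper) auto
  then have "epowr (ereal ?sum) (1/q) \<le> pvar d x q"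
    unfolding pvar_def using \<open>0 \<le> ?sum\<close> assms(3) by (intro epowr_mono) auto
  then have "epowr (epowr (ereal ?sum) (1/q)) \<eta> \<le> epowr (pvar d x q) \<eta>"
    using assms(2) \<open>0 \<le> ?sum\<close> by (intro epowr_mono) (auto simp: epowr_ereal)
  then have "ereal (?sum powr (\<eta> / q)) \<le> epowr (pvar d x q) \<eta>"
    using \<open>0 \<le> ?sum\<close> by (simp add: epowr_ereal powr_powr)
  then show ?thesis
    using assms(1) by (metis ereal_mult_left_mono times_ereal.simps(1) ereal_less_eq(5))
qed

definition fine_partitions :: "real list filter" where
  "fine_partitions = (INF \<delta>\<in>{0<..}. principal {D. partition01 D \<and> mesh D < \<delta>})"

lemma eventually_fine_partitions:
  "eventually P fine_partitions \<longleftrightarrow> (\<exists>\<delta>>0. \<forall>D. partition01 D \<longrightarrow> mesh D < \<delta> \<longrightarrow> P D)"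
  unfolding fine_partitions_def
proof (subst eventually_INF_base)
  show "\<exists>c\<in>{0<..}. principal {D. partition01 D \<and> mesh D < c}
      \<le> inf (principal {D. partition01 D \<and> mesh D < a}) (principal {D. partition01 D \<and> mesh D < b})"
    if "a \<in> {0<..}" "b \<in> {0<..}" for a b :: real
    using that by (intro bexI[of _ "min a b"]) auto
qed (auto simp: eventually_principal)

lemma fine_partitions_neq_bot: "fine_partitions \<noteq> bot"
proof
  assume "fine_partitions = bot"
  then obtain \<delta> where "0 < \<delta>" "\<And>D. partition01 D \<Longrightarrow> mesh D < \<delta> \<Longrightarrow> False"
    using eventually_fine_partitions[of "\<lambda>_. False"] by auto
  then show False using fine_partition_exists[of \<delta> "{}"] by auto
qed

lemma gammaA_eqI:
  assumes "((\<lambda>D. interp_sum A \<gamma> D t) \<longlongrightarrow> L) fine_partitions"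
  shows "gammaA A \<gamma> t = L"
proof -
  have limit_iff: "(\<forall>\<epsilon>>0. \<exists>\<delta>>0. \<forall>D. partition01 D \<and> mesh D < \<delta> \<longrightarrow> norm (interp_sum A \<gamma> D t - L') < \<epsilon>)
      \<longleftrightarrow> ((\<lambda>D. interp_sum A \<gamma> D t) \<longlongrightarrow> L') fine_partitions" for L'
    unfolding tendsto_iff eventually_fine_partitions dist_norm by blast
  have "gammaA A \<gamma> t = (THE L. ((\<lambda>D. interp_sum A \<gamma> D t) \<longlongrightarrow> L) fine_partitions)"
    unfolding gammaA_def limit_iff ..
  also have "\<dots> = L"
    using assms tendsto_unique[OF fine_partitions_neq_bot] by (intro the_equality) blast+
  finally show ?thesis .
qed

lemma wrap_bounds: "-1/2 \<le> wrap r \<and> wrap r < 1/2"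
  unfolding wrap_def by linarith

lemma abs_wrap_le: "\<bar>wrap r\<bar> \<le> \<bar>r - of_int k\<bar>"
proof -
  define m where "m = \<lfloor>r + 1/2\<rfloor>"
  have w: "wrap r = r - of_int m" by (simp add: wrap_def m_def)
  show ?thesis
  proof (cases "k = m")
    case False
    then have "k \<le> m - 1 \<or> m + 1 \<le> k" by linarith
    then have "of_int k \<le> (of_int m::real) - 1 \<or> of_int m + 1 \<le> (of_int k::real)"
      by (metis of_int_1 of_int_diff of_int_add of_int_le_iff)
    then show ?thesis using w wrap_bounds[of r] by auto
  qed (simp add: w)
qed

definition int_lattice :: "(real^2) set" where
  "int_lattice = {v. \<forall>i. v $ i \<in> \<int>}"

lemma diff_tproj_in_int_lattice: "z - tproj z \<in> int_lattice"
  by (auto simp: int_lattice_def tproj_def wrap_def)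

lemma int_lattice_add: "u \<in> int_lattice \<Longrightarrow> v \<in> int_lattice \<Longrightarrow> u + v \<in> int_lattice"
  by (auto simp: int_lattice_def)

lemma int_lattice_uminus: "u \<in> int_lattice \<Longrightarrow> - u \<in> int_lattice"
  by (auto simp: int_lattice_def)

lemma norm_tproj_le: "v \<in> int_lattice \<Longrightarrow> norm (tproj z) \<le> norm (z - v)"
proof (rule norm_le_componentwise_cart)
  fix i
  assume "v \<in> int_lattice"
  then obtain k where "v $ i = of_int k" by (auto simp: int_lattice_def elim!: Ints_cases)
  then show "norm (tproj z $ i) \<le> norm ((z - v) $ i)"
    using abs_wrap_le[of "z $ i" k] by (simp add: tproj_def)
qed

lemma norm_tproj_uminus: "norm (tproj (- z)) = norm (tproj z)"
proof -
  have "norm (tproj (- z)) \<le> norm (- z - (- (z - tproj z)))"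
    by (intro norm_tproj_le int_lattice_uminus diff_tproj_in_int_lattice)
  moreover have "norm (tproj z) \<le> norm (z - (- (- z - tproj (- z))))"
    by (intro norm_tproj_le int_lattice_uminus diff_tproj_in_int_lattice)
  ultimately show ?thesis by (simp add: norm_minus_commute)
qed

lemma tdist_commute: "tdist x y = tdist y x"
  using norm_tproj_uminus[of "x - y"] by (simp add: tdist_def tdiff_def)

lemma tdist_triangle: "tdist x z \<le> tdist x y + tdist y z"
proof -
  let ?v = "((z - y) - tproj (z - y)) + ((y - x) - tproj (y - x))"
  have "tdist x z \<le> norm ((z - x) - ?v)"
    unfolding tdist_def tdiff_def
    by (intro norm_tproj_le int_lattice_add diff_tproj_in_int_lattice)
  also have "(z - x) - ?v = tproj (z - y) + tproj (y - x)"
    by (simp add: algebra_simps)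
  also have "norm \<dots> \<le> tdist y z + tdist x y"
    unfolding tdist_def tdiff_def by (rule norm_triangle_ineq)
  finally show ?thesis by simp
qed

lemma tdiff_self [simp]: "tdiff x x = 0"
  by (simp add: tdiff_def tproj_def wrap_def vec_eq_iff)

lemma tdist_self [simp]: "tdist x x = 0"
  by (simp add: tdist_def)

lemma tdist_nonneg [simp]: "0 \<le> tdist x y"
  by (simp add: tdist_def)

lemma norm_tdiff: "norm (tdiff y x) = tdist x y"
  by (simp add: tdist_def)

lemma tproj_torus: "x \<in> torus \<Longrightarrow> tproj x = x"
proof -
  assume x: "x \<in> torus"
  have "\<lfloor>x $ i + 1/2\<rfloor> = 0" for i
  proof -
    have "-1/2 \<le> x $ i" "x $ i < 1/2" using x unfolding torus_def by auto
    then show ?thesis by (intro floor_unique) auto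
  qed
  then show ?thesis by (simp add: tproj_def wrap_def vec_eq_iff)
qed

lemma abs_det2_le: "\<bar>det2 v w\<bar> \<le> norm v * norm w"
proof -
  have norm2: "norm u = sqrt ((u$1)\<^sup>2 + (u$2)\<^sup>2)" for u :: "real^2"
    unfolding norm_vec_def L2_set_def sum_2 by simp
  have "((v$1)\<^sup>2 + (v$2)\<^sup>2) * ((w$1)\<^sup>2 + (w$2)\<^sup>2) = (det2 v w)\<^sup>2 + (v$1 * w$1 + v$2 * w$2)\<^sup>2"
    unfolding det2_def by (simp add: power2_eq_square algebra_simps)
  then have "(det2 v w)\<^sup>2 \<le> ((v$1)\<^sup>2 + (v$2)\<^sup>2) * ((w$1)\<^sup>2 + (w$2)\<^sup>2)"
    by simp
  then have "sqrt ((det2 v w)\<^sup>2) \<le> sqrt (((v$1)\<^sup>2 + (v$2)\<^sup>2) * ((w$1)\<^sup>2 + (w$2)\<^sup>2))"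
    by (rule real_sqrt_le_mono)
  then show ?thesis by (simp add: norm2 real_sqrt_mult)
qed

lemma tri_area_le: "tri_area (a, b, c) \<le> tdist a b * tdist a c / 2"
  unfolding tri_area_def tri_det_def using abs_det2_le[of "tdiff b a" "tdiff c a"]
  by (simp add: norm_tdiff)

lemma interior_triangle_degenerate:
  fixes a u w :: "real^2"
  assumes "det2 u w = 0"
  shows "interior (convex hull {a, a + u, a + w}) = {}"
proof (cases "u = 0 \<and> w = 0")
  case False
  define n :: "real^2" where "n = (if u \<noteq> 0 then (\<chi> i. if i = 1 then u $ 2 else - u $ 1)
                                  else (\<chi> i. if i = 1 then w $ 2 else - w $ 1))"
  have "n \<noteq> 0"
    using False unfolding n_def vec_eq_iff forall_2 by auto
  have "n \<bullet> u = 0" "n \<bullet> w = 0"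
    using assms False unfolding n_def inner_vec_def sum_2 det2_def by (auto simp: algebra_simps)
  then have "convex hull {a, a + u, a + w} \<subseteq> {x. n \<bullet> x = n \<bullet> a}"
    by (intro hull_minimal convex_hyperplane) (auto simp: inner_add_right)
  then have "interior (convex hull {a, a + u, a + w}) \<subseteq> interior {x. n \<bullet> x = n \<bullet> a}"
    by (rule interior_mono)
  then show ?thesis using \<open>n \<noteq> 0\<close> by simp
qed simp

lemma tri_int_degenerate: "tri_det P = 0 \<Longrightarrow> tri_int P = {}"
  by (cases P) (auto simp: tri_det_def tri_int_def interior_triangle_degenerate)

lemma Omega_zero_length:
  assumes "A \<in> Omega" "x \<in> torus"
  shows "A (x, 0) = 0"
proof -
  have additive: "\<forall>x v w. x \<in> torus \<and> (\<exists>u a b. 0 \<le> a \<and> 0 \<le> b \<and> v = a *\<^sub>R u \<and> w = b *\<^sub>R u)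
        \<and> norm (v + w) \<le> 1/4 \<longrightarrow> A (x, v + w) = A (x, v) + A (tproj (x + v), w)"
    using assms(1) unfolding Omega_def by simp
  have "\<exists>u a b. 0 \<le> a \<and> 0 \<le> b \<and> (0::real^2) = a *\<^sub>R u \<and> (0::real^2) = b *\<^sub>R u"
    by (intro exI[of _ 0]) simp
  then have "A (x, 0 + 0) = A (x, 0) + A (tproj (x + 0), 0)"
    using assms(2) by (intro additive[rule_format]) simp
  then show ?thesis using tproj_torus[OF assms(2)] by simp
qed

lemma gr_norm_nonneg: "0 \<le> gr_norm \<eta> A"
proof -
  define e :: "real^2" where "e = (\<chi> i. if i = 1 then 1/4 else 0)"
  have "norm e = 1/4"
    unfolding e_def norm_vec_def L2_set_def sum_2 by simp
  moreover have "(0::real^2) \<in> torus" by (simp add: torus_def)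
  ultimately have "ereal (norm (A (0, e)) / norm e powr \<eta>) \<le> gr_norm \<eta> A"
    unfolding gr_norm_def by (intro SUP_upper2[of "(0, e)"]) (auto simp: segs_def)
  then show ?thesis by (rule order_trans[rotated]) simp
qed

lemma norm_le_gr_norm:
  assumes "gr_norm \<eta> A = ereal G" "A \<in> Omega" "x \<in> torus" "norm v \<le> 1/4"
  shows "norm (A (x, v)) \<le> G * norm v powr \<eta>"
proof (cases "v = 0")
  case True
  then show ?thesis using Omega_zero_length[OF assms(2,3)] by simp
next
  case False
  then have "ereal (norm (A (x, v)) / norm v powr \<eta>) \<le> gr_norm \<eta> A"
    using assms unfolding gr_norm_def by (intro SUP_upper2[of "(x, v)"]) (auto simp: segs_def)
  then show ?thesis using assms(1) False by (simp add: divide_le_eq mult.commute)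
qed

lemma symm_norm_nonneg: "0 \<le> symm_norm \<alpha> A"
proof -
  let ?P = "(0::real^2, 0::real^2, 0::real^2)"
  have "?P \<in> triangles" by (simp add: triangles_def torus_def)
  then have "eratio (norm (bdry A ?P - bdry A ?P)) (tri_dist ?P ?P powr (\<alpha>/2)) \<le> symm_norm \<alpha> A"
    unfolding symm_norm_def by (intro SUP_upper2[of "(?P, ?P)"]) auto
  then show ?thesis by (simp add: eratio_def zero_ereal_def split: if_splits)
qed

lemma norm_bdry_le_symm_norm:
  assumes S: "symm_norm \<alpha> A = ereal S" and A: "A \<in> Omega" and P: "P \<in> triangles"
  shows "norm (bdry A P) \<le> S * tri_area P powr (\<alpha>/2)"
proof -
  obtain a b c where P_def: "P = (a, b, c)" by (cases P)
  let ?Q = "(a, a, a)"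
  have "a \<in> torus" using P by (simp add: P_def triangles_def)
  then have "?Q \<in> triangles" and bdry_Q: "bdry A ?Q = 0"
    using Omega_zero_length[OF A] by (auto simp: triangles_def bdry_def)
  have det_Q: "tri_det ?Q = 0" by (simp add: tri_det_def det2_def)
  have "eratio (norm (bdry A P - bdry A ?Q)) (tri_dist P ?Q powr (\<alpha>/2)) \<le> symm_norm \<alpha> A"
    unfolding symm_norm_def using P \<open>?Q \<in> triangles\<close> by (intro SUP_upper2[of "(P, ?Q)"]) auto
  then have le_S: "eratio (norm (bdry A P)) (tri_dist P ?Q powr (\<alpha>/2)) \<le> ereal S"
    using S bdry_Q by simp
  show ?thesis
  proof (cases "tri_det P = 0")
    case True
    then have "tri_dist P ?Q = 0"
      using det_Q tri_int_degenerate[of P] tri_int_degenerate[of ?Q] by (simp add: tri_dist_def)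
    then show ?thesis using le_S by (simp add: eratio_def split: if_splits)
  next
    case False
    then have "tri_dist P ?Q = tri_area P" "0 < tri_area P"
      using det_Q by (auto simp: tri_dist_def tri_area_def sgn_if)
    then show ?thesis using le_S by (simp add: eratio_def divide_le_eq mult.commute)
  qed
qed

lemma alpha_var_nonneg: "0 \<le> alpha_var \<alpha> \<gamma>"
proof -
  have "ereal (sum_list (map (\<lambda>(a, b). rpow (tri_size \<gamma> a b) \<alpha>) (intervals [0, 1]))) \<le> alpha_var \<alpha> \<gamma>"
    unfolding alpha_var_def by (intro SUP_upper) (simp add: partition01_def)
  then show ?thesis by (rule order_trans[rotated]) (simp add: intervals_def rpow_def)
qed

text \<open>With the convention x^0 = 1 every partition into n intervals contributes n.\<close>
lemma alpha_var_zero: "alpha_var 0 \<gamma> = \<infinity>"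
proof -
  have "ereal (real (Suc n)) \<le> alpha_var 0 \<gamma>" for n
  proof -
    define D where "D = map (\<lambda>k. real k / real (Suc n)) [0..<Suc (Suc n)]"
    have "sorted_wrt (<) D"
      unfolding D_def sorted_wrt_map
      by (rule sorted_wrt_mono_rel[OF _ sorted_wrt_upt]) (simp add: divide_strict_right_mono)
    moreover have "hd D = 0" by (simp add: D_def upt_rec)
    moreover have "last D = 1" "length D = Suc (Suc n)" by (simp_all add: D_def)
    ultimately have "partition01 D" by (simp add: partition01_def)
    moreover have "(\<lambda>(a, b). rpow (tri_size \<gamma> a b) 0) = (\<lambda>_. 1)"
      by (auto simp: rpow_def)
    then have "sum_list (map (\<lambda>(a, b). rpow (tri_size \<gamma> a b) 0) (intervals D)) = real (Suc n)"
      by (simp add: sum_list_triv D_def intervals_def)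
    ultimately show ?thesis
      unfolding alpha_var_def by (intro SUP_upper2[of D]) auto
  qed
  then show ?thesis
  proof (cases "alpha_var 0 \<gamma>")
    case (real r)
    obtain n :: nat where "r < real n" using reals_Archimedean2 by blast
    then have "r < real (Suc n)" by simp
    then show ?thesis using \<open>ereal (real (Suc n)) \<le> alpha_var 0 \<gamma>\<close> real by simp
  qed (use \<open>ereal (real (Suc 0)) \<le> alpha_var 0 \<gamma>\<close> in auto)
qed

section \<open>Chords and the three-point estimate\<close>

locale sewing_setting =
  fixes \<alpha> \<alpha>' \<eta> :: real and \<gamma> :: "real \<Rightarrow> real^2" and A :: "(real^2) \<times> (real^2) \<Rightarrow> 'e::banach"
    and G S W :: real
  assumes alpha_pos: "0 < \<alpha>" and alpha_less: "\<alpha> < \<alpha>'" and eta_pos: "0 < \<eta>"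
    and path: "torus_path \<gamma>" and A_Omega: "A \<in> Omega"
    and gr_norm_eq: "gr_norm \<eta> A = ereal G" and symm_norm_eq: "symm_norm \<alpha>' A = ereal S"
    and alpha_var_eq: "alpha_var \<alpha> \<gamma> = ereal W"
begin

definition chord :: "real \<Rightarrow> real \<Rightarrow> 'e" where
  "chord a b = A (\<gamma> a, tdiff (\<gamma> b) (\<gamma> a))"

definition tri_pow :: "real \<Rightarrow> real \<Rightarrow> real" where
  "tri_pow a b = tri_size \<gamma> a b powr \<alpha>"

definition \<theta> :: real where
  "\<theta> = \<alpha>' / \<alpha>"

lemma theta_gt_1: "1 < \<theta>"
  using alpha_pos alpha_less by (simp add: \<theta>_def)

lemma G_nonneg: "0 \<le> G"
  using gr_norm_nonneg[of \<eta> A] gr_norm_eq by simp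

lemma S_nonneg: "0 \<le> S"
  using symm_norm_nonneg[of \<alpha>' A] symm_norm_eq by simp

lemma W_nonneg: "0 \<le> W"
  using alpha_var_nonneg[of \<alpha> \<gamma>] alpha_var_eq by simp

lemma path_in_torus: "t \<in> {0..1} \<Longrightarrow> \<gamma> t \<in> torus"
  using path by (auto simp: torus_path_def)

lemma tdist_path_le: "s \<in> {0..1} \<Longrightarrow> t \<in> {0..1} \<Longrightarrow> tdist (\<gamma> s) (\<gamma> t) \<le> 1/4"
  using path by (auto simp: torus_path_def)

lemma path_triangle:
  "a \<in> {0..1} \<Longrightarrow> b \<in> {0..1} \<Longrightarrow> c \<in> {0..1} \<Longrightarrow> (\<gamma> a, \<gamma> b, \<gamma> c) \<in> triangles"
  using path_in_torus tdist_path_le by (simp add: triangles_def)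

lemma chord_self [simp]: "a \<in> {0..1} \<Longrightarrow> chord a a = 0"
  unfolding chord_def using Omega_zero_length[OF A_Omega path_in_torus] by simp

lemma norm_chord_le:
  "a \<in> {0..1} \<Longrightarrow> b \<in> {0..1} \<Longrightarrow> norm (chord a b) \<le> G * tdist (\<gamma> a) (\<gamma> b) powr \<eta>"
  unfolding chord_def
  using norm_le_gr_norm[OF gr_norm_eq A_Omega path_in_torus, of a "tdiff (\<gamma> b) (\<gamma> a)"] tdist_path_le
  by (simp add: norm_tdiff)

lemma tri_size_bdd:
  assumes "a \<in> {0..1}" "b \<in> {0..1}"
  shows "bdd_above ((\<lambda>u. sqrt (tri_area (\<gamma> a, \<gamma> u, \<gamma> b))) ` {a..b})"
proof (rule bdd_aboveI2)
  fix u assume "u \<in> {a..b}"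
  then have "tdist (\<gamma> a) (\<gamma> u) \<le> 1/4" "tdist (\<gamma> a) (\<gamma> b) \<le> 1/4"
    using assms tdist_path_le by auto
  then have "tdist (\<gamma> a) (\<gamma> u) * tdist (\<gamma> a) (\<gamma> b) \<le> 1/4 * (1/4)"
    by (intro mult_mono) auto
  then have "tri_area (\<gamma> a, \<gamma> u, \<gamma> b) \<le> 1/4 * (1/4) / 2"
    using tri_area_le[of "\<gamma> a" "\<gamma> u" "\<gamma> b"] by linarith
  then show "sqrt (tri_area (\<gamma> a, \<gamma> u, \<gamma> b)) \<le> sqrt (1/32)"
    by (simp add: real_sqrt_le_mono)
qed

lemma sqrt_tri_area_le_tri_size:
  "a \<in> {0..1} \<Longrightarrow> b \<in> {0..1} \<Longrightarrow> u \<in> {a..b} \<Longrightarrow> sqrt (tri_area (\<gamma> a, \<gamma> u, \<gamma> b)) \<le> tri_size \<gamma> a b"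
  unfolding tri_size_def by (rule cSUP_upper[OF _ tri_size_bdd])

lemma tri_size_nonneg: "a \<in> {0..1} \<Longrightarrow> b \<in> {0..1} \<Longrightarrow> a \<le> b \<Longrightarrow> 0 \<le> tri_size \<gamma> a b"
  using sqrt_tri_area_le_tri_size[of a b a] by (auto simp: tri_area_def intro: order_trans[rotated])

lemma tri_size_le:
  "a \<le> b \<Longrightarrow> (\<And>u. u \<in> {a..b} \<Longrightarrow> sqrt (tri_area (\<gamma> a, \<gamma> u, \<gamma> b)) \<le> c) \<Longrightarrow> tri_size \<gamma> a b \<le> c"
  unfolding tri_size_def by (rule cSUP_least) auto

lemma tri_pow_nonneg: "0 \<le> tri_pow a b"
  by (simp add: tri_pow_def)

lemma tri_pow_self: "a \<in> {0..1} \<Longrightarrow> tri_pow a a = 0"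
proof -
  assume "a \<in> {0..1}"
  have "tri_size \<gamma> a a \<le> 0"
    by (rule tri_size_le) (auto simp: tri_area_def tri_det_def det2_def)
  then show ?thesis
    using tri_size_nonneg[OF \<open>a \<in> {0..1}\<close> \<open>a \<in> {0..1}\<close>] alpha_pos by (simp add: tri_pow_def)
qed

lemma tri_size_powr_alpha': "a \<in> {0..1} \<Longrightarrow> b \<in> {0..1} \<Longrightarrow> a \<le> b \<Longrightarrow> tri_size \<gamma> a b powr \<alpha>' = tri_pow a b powr \<theta>"
  using alpha_pos tri_size_nonneg by (simp add: tri_pow_def \<theta>_def powr_powr)

text \<open>The chord-sum defect of a, u, b is A on the boundary of the triangle through
  \<gamma> a, \<gamma> u, \<gamma> b, compared with the degenerate triangle \<gamma> a, \<gamma> b, \<gamma> a.\<close>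
lemma three_point:
  assumes "a \<in> {0..1}" "b \<in> {0..1}" "u \<in> {a..b}"
  shows "norm (chord a u + chord u b - chord a b) \<le> S * tri_pow a b powr \<theta>"
proof -
  have u: "u \<in> {0..1}" using assms by auto
  let ?P = "(\<gamma> a, \<gamma> u, \<gamma> b)" and ?Q = "(\<gamma> a, \<gamma> b, \<gamma> a)"
  have "norm (bdry A ?Q) \<le> S * tri_area ?Q powr (\<alpha>'/2)"
    using norm_bdry_le_symm_norm[OF symm_norm_eq A_Omega path_triangle[OF assms(1,2,1)]] .
  moreover have "tri_area ?Q = 0" by (simp add: tri_area_def tri_det_def det2_def)
  ultimately have "bdry A ?Q = 0" by simp
  then have "chord b a = - chord a b"
    using Omega_zero_length[OF A_Omega path_in_torus[OF assms(1)]]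
    by (simp add: chord_def bdry_def eq_neg_iff_add_eq_0 add.commute)
  then have "norm (chord a u + chord u b - chord a b) = norm (bdry A ?P)"
    by (simp add: chord_def bdry_def)
  also have "\<dots> \<le> S * tri_area ?P powr (\<alpha>'/2)"
    using norm_bdry_le_symm_norm[OF symm_norm_eq A_Omega path_triangle[OF assms(1) u assms(2)]] .
  also have "tri_area ?P powr (\<alpha>'/2) = sqrt (tri_area ?P) powr \<alpha>'"
    by (simp add: tri_area_def powr_half_sqrt[symmetric] powr_powr)
  also have "\<dots> \<le> tri_size \<gamma> a b powr \<alpha>'"
    using sqrt_tri_area_le_tri_size[OF assms] alpha_pos alpha_less
    by (intro powr_mono2) (auto simp: tri_area_def)
  also have "\<dots> = tri_pow a b powr \<theta>"
    using tri_size_powr_alpha'[OF assms(1,2)] assms(3) by simp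
  finally show ?thesis using S_nonneg by (simp add: mult_left_mono)
qed

section \<open>The control of the \<alpha>-variation\<close>

lemma chain_sum_tri_pow_partition01_le: "partition01 D \<Longrightarrow> chain_sum tri_pow (set D) \<le> W"
proof -
  assume D: "partition01 D"
  have "(\<lambda>(a, b). rpow (tri_size \<gamma> a b) \<alpha>) = (\<lambda>(a, b). tri_pow a b)"
    using alpha_pos by (auto simp: rpow_def tri_pow_def)
  then have "ereal (sum_list (map (\<lambda>(a, b). tri_pow a b) (intervals D))) \<le> alpha_var \<alpha> \<gamma>"
    unfolding alpha_var_def using D by (metis (mono_tags, lifting) SUP_upper mem_Collect_eq)
  then show ?thesis
    using D alpha_var_eq
    by (simp add: sum_list_intervals_eq_chain_sum partition01_sorted partition01_nonempty)
qed

lemma chain_sum_tri_pow_le_W: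
  assumes "0 \<le> a" "b \<le> 1" "is_partition a b F"
  shows "chain_sum tri_pow F \<le> W"
proof -
  have "is_partition 0 1 (F \<union> {0, 1})" using assms by (auto simp: is_partition_def)
  then obtain D where D: "partition01 D" "set D = F \<union> {0, 1}" by (rule partition01_of_set)
  have "{x\<in>F \<union> {0, 1}. a \<le> x \<and> x \<le> b} = F"
    using assms by (auto simp: is_partition_def)
  then have "chain_sum tri_pow F \<le> chain_sum tri_pow (set D)"
    using assms D(2) chain_sum_restrict_le[OF tri_pow_nonneg, of "F \<union> {0, 1}" a b]
    by (auto simp: is_partition_def)
  also have "\<dots> \<le> W" using D(1) by (rule chain_sum_tri_pow_partition01_le)
  finally show ?thesis .
qed

definition control :: "real \<Rightarrow> real \<Rightarrow> real" where
  "control a b = Sup (chain_sum tri_pow ` {F. is_partition a b F})"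

lemma control_upper: "0 \<le> a \<Longrightarrow> b \<le> 1 \<Longrightarrow> is_partition a b F \<Longrightarrow> chain_sum tri_pow F \<le> control a b"
  unfolding control_def using chain_sum_tri_pow_le_W by (intro cSup_upper bdd_aboveI2) auto

lemma control_least:
  "a \<le> b \<Longrightarrow> (\<And>F. is_partition a b F \<Longrightarrow> chain_sum tri_pow F \<le> c) \<Longrightarrow> control a b \<le> c"
  unfolding control_def by (rule cSup_least) (use is_partition_pair in auto)

lemma control_le_W: "0 \<le> a \<Longrightarrow> a \<le> b \<Longrightarrow> b \<le> 1 \<Longrightarrow> control a b \<le> W"
  using control_least chain_sum_tri_pow_le_W by blast

lemma tri_pow_le_control:
  assumes "0 \<le> a" "a \<le> b" "b \<le> 1"
  shows "tri_pow a b \<le> control a b"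
proof (cases "a = b")
  case True
  then show ?thesis
    using tri_pow_self[of a] assms control_upper[of a b "{a}"] by (simp add: is_partition_def)
next
  case False
  then show ?thesis
    using assms control_upper[OF assms(1,3) is_partition_pair[OF assms(2)]] by (simp add: chain_sum_pair)
qed

lemma control_nonneg: "0 \<le> a \<Longrightarrow> a \<le> b \<Longrightarrow> b \<le> 1 \<Longrightarrow> 0 \<le> control a b"
  using tri_pow_le_control tri_pow_nonneg order_trans by blast

lemma control_self: "0 \<le> a \<Longrightarrow> a \<le> 1 \<Longrightarrow> control a a = 0"
proof -
  assume "0 \<le> a" "a \<le> 1"
  have "control a a \<le> 0"
    by (rule control_least) (auto simp: is_partition_def subset_singleton_iff)
  then show ?thesis using control_nonneg[of a a] \<open>0 \<le> a\<close> \<open>a \<le> 1\<close> by simp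
qed

lemma control_superadditive:
  assumes "0 \<le> a" "a \<le> c" "c \<le> b" "b \<le> 1"
  shows "control a c + control c b \<le> control a b"
proof -
  have "control c b \<le> control a b - control a c"
  proof (rule control_least[OF assms(3)])
    fix F2 assume F2: "is_partition c b F2"
    have "control a c \<le> control a b - chain_sum tri_pow F2"
    proof (rule control_least[OF assms(2)])
      fix F1 assume F1: "is_partition a c F1"
      have "chain_sum tri_pow F1 + chain_sum tri_pow F2 \<le> control a b"
        using chain_sum_union[OF F1 F2, of tri_pow] control_upper[OF assms(1,4) is_partition_union[OF F1 F2]]
        by simp
      then show "chain_sum tri_pow F1 \<le> control a b - chain_sum tri_pow F2" by simp
    qed
    then show "chain_sum tri_pow F2 \<le> control a b - control a c" by simp
  qed
  then show ?thesis by simp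
qed

lemma control_mono:
  assumes "0 \<le> a" "a \<le> a'" "a' \<le> b'" "b' \<le> b" "b \<le> 1"
  shows "control a' b' \<le> control a b"
proof -
  have "control a a' + control a' b \<le> control a b"
    using assms by (intro control_superadditive) auto
  moreover have "control a' b' + control b' b \<le> control a' b"
    using assms by (intro control_superadditive) auto
  moreover have "0 \<le> control a a'" "0 \<le> control b' b"
    using assms by (auto intro: control_nonneg)
  ultimately show ?thesis by linarith
qed

text \<open>Conversely, cutting [a, b] at c loses at most one term of a partition.\<close>
lemma control_le_split:
  assumes "0 \<le> a" "a \<le> c" "c \<le> b" "b \<le> 1"
    and T: "\<And>p q. a \<le> p \<Longrightarrow> p \<le> q \<Longrightarrow> q \<le> b \<Longrightarrow> tri_pow p q \<le> T"
  shows "control a b \<le> control a c + control c b + T"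
proof (rule control_least)
  fix F assume F: "is_partition a b F"
  then have fin: "finite F" by (simp add: is_partition_def)
  show "chain_sum tri_pow F \<le> control a c + control c b + T"
  proof (cases "c \<in> F")
    case True
    have "chain_sum tri_pow {x\<in>F. x \<le> c} \<le> control a c"
      using F True assms by (intro control_upper) (auto simp: is_partition_def)
    moreover have "chain_sum tri_pow {x\<in>F. c \<le> x} \<le> control c b"
      using F True assms by (intro control_upper) (auto simp: is_partition_def)
    moreover have "0 \<le> T" using T[of a a] assms tri_pow_nonneg[of a a] by linarith
    ultimately show ?thesis using chain_sum_split[OF fin True, of tri_pow] by linarith
  next
    case False
    then have "a < c" "c < b" "a \<in> F" "b \<in> F"
      using F assms by (auto simp: is_partition_def order.order_iff_strict)
    then obtain p q where pq: "consecutive F p q" "p < c" "c < q"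
      using consecutive_around[OF fin _ _ _ _ False] by metis
    have range: "a \<le> p" "q \<le> b" using F pq by (auto simp: is_partition_def consecutive_def)
    have "{x\<in>F. x \<le> p} \<noteq> {}" "{x\<in>F. q \<le> x} \<noteq> {}" using pq by (auto simp: consecutive_def)
    then have "chain_sum tri_pow (insert c {x\<in>F. x \<le> p})
        = chain_sum tri_pow {x\<in>F. x \<le> p} + tri_pow (Max {x\<in>F. x \<le> p}) c"
      and "chain_sum tri_pow (insert c {x\<in>F. q \<le> x})
        = tri_pow c (Min {x\<in>F. q \<le> x}) + chain_sum tri_pow {x\<in>F. q \<le> x}"
      using fin pq by (intro chain_sum_insert_Max chain_sum_insert_Min; force)+
    then have "chain_sum tri_pow {x\<in>F. x \<le> p} \<le> chain_sum tri_pow (insert c {x\<in>F. x \<le> p})"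
      and "chain_sum tri_pow {x\<in>F. q \<le> x} \<le> chain_sum tri_pow (insert c {x\<in>F. q \<le> x})"
      using tri_pow_nonneg by simp_all
    moreover have "chain_sum tri_pow (insert c {x\<in>F. x \<le> p}) \<le> control a c"
      using F pq assms range by (intro control_upper) (auto simp: is_partition_def consecutive_def)
    moreover have "chain_sum tri_pow (insert c {x\<in>F. q \<le> x}) \<le> control c b"
      using F pq assms range by (intro control_upper) (auto simp: is_partition_def consecutive_def)
    moreover have "tri_pow p q \<le> T" using pq range by (intro T) (auto simp: consecutive_def)
    ultimately show ?thesis using chain_sum_split_consecutive[OF fin pq(1), of tri_pow] by linarith
  qed
qed (use assms in simp)

lemma path_uniformly_continuous:
  assumes "0 < \<epsilon>"
  obtains \<delta> where "0 < \<delta>"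
    "\<And>s t. s \<in> {0..1} \<Longrightarrow> t \<in> {0..1} \<Longrightarrow> \<bar>s - t\<bar> < \<delta> \<Longrightarrow> tdist (\<gamma> s) (\<gamma> t) < \<epsilon>"
proof -
  have "\<forall>x\<in>{0..1}. \<exists>r>0. \<forall>s\<in>{0..1}. \<bar>s - x\<bar> < r \<longrightarrow> tdist (\<gamma> s) (\<gamma> x) < \<epsilon>/2"
    using path assms unfolding torus_path_def by (meson half_gt_zero)
  then obtain r where r: "\<And>x. x \<in> {0..1} \<Longrightarrow> 0 < r x"
    "\<And>x s. x \<in> {0..1} \<Longrightarrow> s \<in> {0..1} \<Longrightarrow> \<bar>s - x\<bar> < r x \<Longrightarrow> tdist (\<gamma> s) (\<gamma> x) < \<epsilon>/2"
    by metis
  obtain \<delta> where \<delta>: "0 < \<delta>"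
    "\<And>s t. s \<in> {0..1} \<Longrightarrow> dist s t < \<delta> \<Longrightarrow> \<exists>x\<in>{0..1}. dist x s < r x \<and> dist x t < r x"
    using compact_Lebesgue_number[OF compact_Icc, where r=r] r(1) by blast
  show ?thesis
  proof (rule that[OF \<delta>(1)])
    fix s t :: real assume st: "s \<in> {0..1}" "t \<in> {0..1}" "\<bar>s - t\<bar> < \<delta>"
    then obtain x where "x \<in> {0..1}" "\<bar>s - x\<bar> < r x" "\<bar>t - x\<bar> < r x"
      using \<delta>(2)[of s t] by (auto simp: dist_real_def abs_minus_commute)
    then have "tdist (\<gamma> s) (\<gamma> x) < \<epsilon>/2" "tdist (\<gamma> t) (\<gamma> x) < \<epsilon>/2"
      using r(2) st by auto
    then show "tdist (\<gamma> s) (\<gamma> t) < \<epsilon>"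
      using tdist_triangle[of "\<gamma> s" "\<gamma> t" "\<gamma> x"] tdist_commute[of "\<gamma> x" "\<gamma> t"] by linarith
  qed
qed

lemma tri_pow_uniformly_small:
  assumes "0 < \<epsilon>"
  obtains \<delta> where "0 < \<delta>" "\<And>p q. 0 \<le> p \<Longrightarrow> p \<le> q \<Longrightarrow> q \<le> 1 \<Longrightarrow> q - p < \<delta> \<Longrightarrow> tri_pow p q < \<epsilon>"
proof -
  define e where "e = (\<epsilon>/2) powr (1/\<alpha>)"
  have e: "0 < e" "e powr \<alpha> = \<epsilon>/2"
    using assms alpha_pos by (simp_all add: e_def powr_powr)
  obtain \<delta> where \<delta>: "0 < \<delta>"
    "\<And>s t. s \<in> {0..1} \<Longrightarrow> t \<in> {0..1} \<Longrightarrow> \<bar>s - t\<bar> < \<delta> \<Longrightarrow> tdist (\<gamma> s) (\<gamma> t) < e"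
    using path_uniformly_continuous[OF e(1)] by blast
  show ?thesis
  proof (rule that[OF \<delta>(1)])
    fix p q :: real assume pq: "0 \<le> p" "p \<le> q" "q \<le> 1" "q - p < \<delta>"
    have "tri_size \<gamma> p q \<le> e"
    proof (rule tri_size_le[OF pq(2)])
      fix u assume "u \<in> {p..q}"
      then have "tdist (\<gamma> p) (\<gamma> u) * tdist (\<gamma> p) (\<gamma> q) \<le> e * e"
        using \<delta>(2) pq e(1) by (intro mult_mono) (auto intro: less_imp_le)
      then have "tri_area (\<gamma> p, \<gamma> u, \<gamma> q) \<le> e * e"
        using tri_area_le[of "\<gamma> p" "\<gamma> u" "\<gamma> q"] mult_pos_pos[OF e(1) e(1)] by linarith
      then show "sqrt (tri_area (\<gamma> p, \<gamma> u, \<gamma> q)) \<le> e"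
        using e(1) real_sqrt_le_mono by fastforce
    qed
    then have "tri_pow p q \<le> e powr \<alpha>"
      unfolding tri_pow_def using tri_size_nonneg[of p q] pq alpha_pos by (intro powr_mono2) auto
    then show "tri_pow p q < \<epsilon>" using e assms by simp
  qed
qed

lemma control_lt_split_last:
  assumes "0 \<le> a" "a < b" "b \<le> 1" "y < control a b"
  obtains p where "a \<le> p" "p < b" "y < control a p + tri_pow p b"
proof -
  have "\<exists>z\<in>chain_sum tri_pow ` {F. is_partition a b F}. y < z"
    using assms(4) is_partition_pair[of a b] assms(2) unfolding control_def
    by (intro less_cSupD) auto
  then obtain F where F: "is_partition a b F" "y < chain_sum tri_pow F" by auto
  obtain m where m: "consecutive F m b" using is_partition_last[OF F(1) assms(2)] .
  have "a \<le> m" "m < b" using F(1) m by (auto simp: is_partition_def consecutive_def)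
  moreover have "chain_sum tri_pow {x\<in>F. x \<le> m} \<le> control a m"
    using F(1) m assms \<open>m < b\<close> by (intro control_upper is_partition_prefix) (auto simp: consecutive_def)
  ultimately show ?thesis
    using that F(2) chain_sum_snoc[OF F(1) m, of tri_pow] by force
qed

lemma control_lt_split_first:
  assumes "0 \<le> a" "a < b" "b \<le> 1" "y < control a b"
  obtains q where "a < q" "q \<le> b" "y < tri_pow a q + control q b"
proof -
  have "\<exists>z\<in>chain_sum tri_pow ` {F. is_partition a b F}. y < z"
    using assms(4) is_partition_pair[of a b] assms(2) unfolding control_def
    by (intro less_cSupD) auto
  then obtain F where F: "is_partition a b F" "y < chain_sum tri_pow F" by auto
  obtain q where q: "consecutive F a q" using is_partition_first[OF F(1) assms(2)] .
  have "a < q" "q \<le> b" using F(1) q by (auto simp: is_partition_def consecutive_def)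
  moreover have "chain_sum tri_pow {x\<in>F. q \<le> x} \<le> control q b"
    using F(1) q assms \<open>a < q\<close> by (intro control_upper is_partition_suffix) (auto simp: consecutive_def)
  ultimately show ?thesis
    using that F(2) chain_sum_cons[OF F(1) q, of tri_pow] by force
qed

text \<open>If the control were at least \<epsilon> on all intervals ending at x, splitting off the short
  last interval (where tri_pow is small) would make it grow without bound.\<close>
lemma control_left_growth:
  assumes "x \<le> 1" "0 < \<epsilon>"
    and small: "\<And>p q. 0 \<le> p \<Longrightarrow> p \<le> q \<Longrightarrow> q \<le> 1 \<Longrightarrow> q - p < \<delta> \<Longrightarrow> tri_pow p q < \<epsilon>/4"
    and big: "\<And>h. 0 < h \<Longrightarrow> h \<le> x \<Longrightarrow> \<epsilon> \<le> control (x - h) x"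
  shows "0 < h \<Longrightarrow> h \<le> x \<Longrightarrow> h < \<delta> \<Longrightarrow> real n * (\<epsilon>/2) \<le> control (x - h) x"
proof (induction n arbitrary: h)
  case 0
  then show ?case using control_nonneg assms(1) by simp
next
  case (Suc n)
  obtain p where p: "x - h \<le> p" "p < x" "3/4 * \<epsilon> < control (x - h) p + tri_pow p x"
    using control_lt_split_last[of "x - h" x "3/4 * \<epsilon>"] big[of h] Suc.prems assms(1,2) by auto
  have "tri_pow p x < \<epsilon>/4" by (intro small) (use p Suc.prems assms(1) in auto)
  then have "\<epsilon>/2 < control (x - h) p" using p(3) by simp
  moreover have "real n * (\<epsilon>/2) \<le> control p x"
    using Suc.IH[of "x - p"] Suc.prems p by simp
  moreover have "control (x - h) p + control p x \<le> control (x - h) x"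
    using Suc.prems p assms(1) by (intro control_superadditive) auto
  ultimately show ?case by (simp add: algebra_simps)
qed

lemma control_right_growth:
  assumes "0 \<le> x" "0 < \<epsilon>"
    and small: "\<And>p q. 0 \<le> p \<Longrightarrow> p \<le> q \<Longrightarrow> q \<le> 1 \<Longrightarrow> q - p < \<delta> \<Longrightarrow> tri_pow p q < \<epsilon>/4"
    and big: "\<And>h. 0 < h \<Longrightarrow> x + h \<le> 1 \<Longrightarrow> \<epsilon> \<le> control x (x + h)"
  shows "0 < h \<Longrightarrow> x + h \<le> 1 \<Longrightarrow> h < \<delta> \<Longrightarrow> real n * (\<epsilon>/2) \<le> control x (x + h)"
proof (induction n arbitrary: h)
  case 0
  then show ?case using control_nonneg assms(1) by simp
next
  case (Suc n)
  obtain q where q: "x < q" "q \<le> x + h" "3/4 * \<epsilon> < tri_pow x q + control q (x + h)"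
    using control_lt_split_first[of x "x + h" "3/4 * \<epsilon>"] big[of h] Suc.prems assms(1,2) by auto
  have "tri_pow x q < \<epsilon>/4" by (intro small) (use q Suc.prems assms(1) in auto)
  then have "\<epsilon>/2 < control q (x + h)" using q(3) by simp
  moreover have "real n * (\<epsilon>/2) \<le> control x q"
    using Suc.IH[of "q - x"] Suc.prems q by simp
  moreover have "control x q + control q (x + h) \<le> control x (x + h)"
    using Suc.prems q assms(1) by (intro control_superadditive) auto
  ultimately show ?case by (simp add: algebra_simps)
qed

lemma control_small_left:
  assumes "x \<in> {0..1}" "0 < \<epsilon>"
  obtains h where "0 < h" "\<And>a. 0 \<le> a \<Longrightarrow> x - h < a \<Longrightarrow> a \<le> x \<Longrightarrow> control a x < \<epsilon>"
proof (rule ccontr)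
  assume no_h: "\<not> thesis"
  note h_rule = that
  have big: "\<epsilon> \<le> control (x - h) x" if h: "0 < h" "h \<le> x" for h
  proof -
    have "\<not> (\<forall>a. 0 \<le> a \<longrightarrow> x - h < a \<longrightarrow> a \<le> x \<longrightarrow> control a x < \<epsilon>)"
      using no_h h_rule h(1) by blast
    then obtain a where "0 \<le> a" "x - h < a" "a \<le> x" "\<epsilon> \<le> control a x"
      by (auto simp: not_less)
    then show ?thesis
      using control_mono[of "x - h" a x x] h assms(1) by auto
  qed
  have "0 < x"
  proof (rule ccontr)
    assume "\<not> 0 < x"
    then have "x = 0" using assms(1) by simp
    then show False using no_h h_rule[of 1] control_self[of 0] assms(2) by force
  qed
  obtain \<delta> where \<delta>: "0 < \<delta>" "\<And>p q. 0 \<le> p \<Longrightarrow> p \<le> q \<Longrightarrow> q \<le> 1 \<Longrightarrow> q - p < \<delta> \<Longrightarrow> tri_pow p q < \<epsilon>/4"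
    using tri_pow_uniformly_small[of "\<epsilon>/4"] assms(2) by auto
  obtain n :: nat where n: "W / (\<epsilon>/2) < real n" using reals_Archimedean2 by blast
  let ?h = "min x (\<delta>/2)"
  have "real n * (\<epsilon>/2) \<le> control (x - ?h) x"
    using control_left_growth[OF _ assms(2) \<delta>(2) big] \<open>0 < x\<close> \<delta>(1) assms(1) by auto
  also have "\<dots> \<le> W" using \<open>0 < x\<close> \<delta>(1) assms(1) by (intro control_le_W) auto
  finally show False using n assms(2) by (simp add: field_simps)
qed

lemma control_small_right:
  assumes "x \<in> {0..1}" "0 < \<epsilon>"
  obtains h where "0 < h" "\<And>b. x \<le> b \<Longrightarrow> b < x + h \<Longrightarrow> b \<le> 1 \<Longrightarrow> control x b < \<epsilon>"
proof (rule ccontr)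
  assume no_h: "\<not> thesis"
  note h_rule = that
  have big: "\<epsilon> \<le> control x (x + h)" if h: "0 < h" "x + h \<le> 1" for h
  proof -
    have "\<not> (\<forall>b. x \<le> b \<longrightarrow> b < x + h \<longrightarrow> b \<le> 1 \<longrightarrow> control x b < \<epsilon>)"
      using no_h h_rule h(1) by blast
    then obtain b where "x \<le> b" "b < x + h" "b \<le> 1" "\<epsilon> \<le> control x b"
      by (auto simp: not_less)
    then show ?thesis
      using control_mono[of x x b "x + h"] h assms(1) by auto
  qed
  have "x < 1"
  proof (rule ccontr)
    assume "\<not> x < 1"
    then have "x = 1" using assms(1) by simp
    then show False using no_h h_rule[of 1] control_self[of 1] assms(2) by force
  qed
  obtain \<delta> where \<delta>: "0 < \<delta>" "\<And>p q. 0 \<le> p \<Longrightarrow> p \<le> q \<Longrightarrow> q \<le> 1 \<Longrightarrow> q - p < \<delta> \<Longrightarrow> tri_pow p q < \<epsilon>/4"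
    using tri_pow_uniformly_small[of "\<epsilon>/4"] assms(2) by auto
  obtain n :: nat where n: "W / (\<epsilon>/2) < real n" using reals_Archimedean2 by blast
  let ?h = "min (1 - x) (\<delta>/2)"
  have "real n * (\<epsilon>/2) \<le> control x (x + ?h)"
    using control_right_growth[OF _ assms(2) \<delta>(2) big] \<open>x < 1\<close> \<delta>(1) assms(1) by auto
  also have "\<dots> \<le> W" using \<open>x < 1\<close> \<delta>(1) assms(1) by (intro control_le_W) auto
  finally show False using n assms(2) by (simp add: field_simps)
qed

lemma control_small_around:
  assumes "x \<in> {0..1}" "0 < \<epsilon>"
  obtains r where "0 < r" "\<And>a. 0 \<le> a \<Longrightarrow> x - r < a \<Longrightarrow> a \<le> x \<Longrightarrow> control a x < \<epsilon>"
    "\<And>b. x \<le> b \<Longrightarrow> b < x + r \<Longrightarrow> b \<le> 1 \<Longrightarrow> control x b < \<epsilon>"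
proof -
  obtain h1 where "0 < h1" "\<And>a. 0 \<le> a \<Longrightarrow> x - h1 < a \<Longrightarrow> a \<le> x \<Longrightarrow> control a x < \<epsilon>"
    using control_small_left[OF assms] by blast
  moreover obtain h2 where "0 < h2" "\<And>b. x \<le> b \<Longrightarrow> b < x + h2 \<Longrightarrow> b \<le> 1 \<Longrightarrow> control x b < \<epsilon>"
    using control_small_right[OF assms] by blast
  ultimately show ?thesis using that[of "min h1 h2"] by auto
qed

lemma control_less_near:
  assumes ab: "0 \<le> a" "a \<le> b" "b \<le> 1" and x: "x \<in> {0..1}" "\<bar>x - a\<bar> < r" "\<bar>x - b\<bar> < r" "2 * r \<le> d"
    and small: "\<And>p q. 0 \<le> p \<Longrightarrow> p \<le> q \<Longrightarrow> q \<le> 1 \<Longrightarrow> q - p < d \<Longrightarrow> tri_pow p q < \<epsilon>"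
    and left: "\<And>a. 0 \<le> a \<Longrightarrow> x - r < a \<Longrightarrow> a \<le> x \<Longrightarrow> control a x < \<epsilon>"
    and right: "\<And>b. x \<le> b \<Longrightarrow> b < x + r \<Longrightarrow> b \<le> 1 \<Longrightarrow> control x b < \<epsilon>"
  shows "control a b < 3 * \<epsilon>"
proof -
  have "control x x < \<epsilon>" using left[of x] x by auto
  then have "0 < \<epsilon>" using control_self[of x] x by simp
  consider "a \<le> x" "x \<le> b" | "b < x" | "x < a" by linarith
  then show ?thesis
  proof cases
    case 1
    then have "control a b \<le> control a x + control x b + \<epsilon>"
      using ab x small by (intro control_le_split) (auto intro: less_imp_le)
    then show ?thesis using left[of a] right[of b] 1 ab x by auto
  next
    case 2
    then have "control a b \<le> control a x" using ab x by (intro control_mono) auto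
    then show ?thesis using left[of a] 2 ab x \<open>0 < \<epsilon>\<close> by auto
  next
    case 3
    then have "control a b \<le> control x b" using ab x by (intro control_mono) auto
    then show ?thesis using right[of b] 3 ab x \<open>0 < \<epsilon>\<close> by auto
  qed
qed

lemma control_uniformly_small:
  assumes "0 < \<epsilon>"
  obtains \<delta> where "0 < \<delta>" "\<And>a b. 0 \<le> a \<Longrightarrow> a \<le> b \<Longrightarrow> b \<le> 1 \<Longrightarrow> b - a < \<delta> \<Longrightarrow> control a b < \<epsilon>"
proof -
  obtain d where d: "0 < d" "\<And>p q. 0 \<le> p \<Longrightarrow> p \<le> q \<Longrightarrow> q \<le> 1 \<Longrightarrow> q - p < d \<Longrightarrow> tri_pow p q < \<epsilon>/3"
    using tri_pow_uniformly_small[of "\<epsilon>/3"] assms by auto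
  have "\<exists>r>0. (\<forall>a. 0 \<le> a \<longrightarrow> x - r < a \<longrightarrow> a \<le> x \<longrightarrow> control a x < \<epsilon>/3)
      \<and> (\<forall>b. x \<le> b \<longrightarrow> b < x + r \<longrightarrow> b \<le> 1 \<longrightarrow> control x b < \<epsilon>/3)" if "x \<in> {0..1}" for x
    using control_small_around[OF that, of "\<epsilon>/3"] assms by (metis zero_less_divide_iff zero_less_numeral)
  then obtain r where r: "\<And>x. x \<in> {0..1} \<Longrightarrow> 0 < r x
      \<and> (\<forall>a. 0 \<le> a \<longrightarrow> x - r x < a \<longrightarrow> a \<le> x \<longrightarrow> control a x < \<epsilon>/3)
      \<and> (\<forall>b. x \<le> b \<longrightarrow> b < x + r x \<longrightarrow> b \<le> 1 \<longrightarrow> control x b < \<epsilon>/3)"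
    by metis
  let ?r = "\<lambda>x. min (r x) (d/2)"
  have r_pos: "0 < ?r x" if "x \<in> {0..1}" for x using r[OF that] d(1) by simp
  obtain e where e: "0 < e"
    "\<And>s t. s \<in> {0..1} \<Longrightarrow> dist s t < e \<Longrightarrow> \<exists>x\<in>{0..1}. dist x s < ?r x \<and> dist x t < ?r x"
    using compact_Lebesgue_number[where r="\<lambda>x. min (r x) (d/2)", OF compact_Icc r_pos] by blast
  show ?thesis
  proof (rule that[OF e(1)])
    fix a b :: real assume ab: "0 \<le> a" "a \<le> b" "b \<le> 1" "b - a < e"
    then obtain x where x: "x \<in> {0..1}" "\<bar>x - a\<bar> < ?r x" "\<bar>x - b\<bar> < ?r x"
      using e(2)[of a b] by (auto simp: dist_real_def)
    then have "control a b < 3 * (\<epsilon>/3)"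
      using r[OF x(1)] by (intro control_less_near[OF ab(1-3) x _ d(2)]) auto
    then show "control a b < \<epsilon>" by simp
  qed
qed

section \<open>Young's sewing argument\<close>

text \<open>The intervals [x j, x (j + 2)] with j of equal parity are disjoint.\<close>
lemma sum_control_skip_le:
  assumes "\<forall>i<Suc m. x i < x (Suc i)" "0 \<le> x 0" "x (Suc m) \<le> 1"
  shows "(\<Sum>j<m. control (x j) (x (Suc (Suc j)))) \<le> control (x 0) (x (Suc m)) + control (x 0) (x m)"
  using assms
proof (induction m)
  case 0
  then show ?case using control_nonneg[of "x 0" "x 1"] control_self[of "x 0"] by simp
next
  case (Suc m)
  have le: "x i \<le> x j" if "i \<le> j" "j \<le> Suc (Suc m)" for i j
    using strict_chain_le[OF Suc.prems(1) that] .
  have "(\<Sum>j<m. control (x j) (x (Suc (Suc j)))) \<le> control (x 0) (x (Suc m)) + control (x 0) (x m)"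
    using Suc le[of "Suc m" "Suc (Suc m)"] by simp
  moreover have "control (x 0) (x m) + control (x m) (x (Suc (Suc m))) \<le> control (x 0) (x (Suc (Suc m)))"
    using Suc.prems le by (intro control_superadditive) auto
  ultimately show ?case by simp
qed

lemma exists_removable_point:
  assumes "\<forall>i<Suc m. x i < x (Suc i)" "0 \<le> x 0" "x (Suc m) \<le> 1" "0 < m"
  obtains j where "j < m" "tri_pow (x j) (x (Suc (Suc j))) \<le> 2 * control (x 0) (x (Suc m)) / m"
proof -
  have le: "x i \<le> x j" if "i \<le> j" "j \<le> Suc m" for i j
    using strict_chain_le[OF assms(1) that] .
  obtain j where j: "j < m"
    "tri_pow (x j) (x (Suc (Suc j))) * m \<le> (\<Sum>j<m. tri_pow (x j) (x (Suc (Suc j))))"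
    using exists_le_average[of "{..<m}" "\<lambda>j. tri_pow (x j) (x (Suc (Suc j)))"] assms(4) by auto
  note j(2)
  also have "\<dots> \<le> (\<Sum>j<m. control (x j) (x (Suc (Suc j))))"
  proof (rule sum_mono)
    fix j assume "j \<in> {..<m}"
    then show "tri_pow (x j) (x (Suc (Suc j))) \<le> control (x j) (x (Suc (Suc j)))"
      using assms(2,3) le[of 0 j] le[of j "Suc (Suc j)"] le[of "Suc (Suc j)" "Suc m"]
      by (intro tri_pow_le_control) auto
  qed
  also have "\<dots> \<le> control (x 0) (x (Suc m)) + control (x 0) (x m)"
    using sum_control_skip_le[OF assms(1-3)] .
  also have "control (x 0) (x m) \<le> control (x 0) (x (Suc m))"
    using assms le by (intro control_mono) auto
  finally show ?thesis
    using that j(1) assms(4) by (simp add: field_simps)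
qed

text \<open>Young's argument: delete, one at a time, the point whose neighbours are closest in
  the control, and estimate each deletion by the three-point bound.\<close>
lemma sewing_sum_bound:
  "\<forall>i<n. x i < x (Suc i) \<Longrightarrow> 0 \<le> x 0 \<Longrightarrow> x n \<le> 1 \<Longrightarrow>
    norm ((\<Sum>i<n. chord (x i) (x (Suc i))) - chord (x 0) (x n))
      \<le> S * (\<Sum>k=1..n-1. (2 * control (x 0) (x n) / real k) powr \<theta>)"
proof (induction n arbitrary: x)
  case (Suc m)
  let ?\<omega> = "control (x 0) (x (Suc m))"
  have le: "x i \<le> x j" if "i \<le> j" "j \<le> Suc m" for i j
    using strict_chain_le[OF Suc.prems(1) that] .
  show ?case
  proof (cases "m = 0")
    case False
    obtain j where j: "j < m" "tri_pow (x j) (x (Suc (Suc j))) \<le> 2 * ?\<omega> / m"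
      using exists_removable_point[OF Suc.prems] False by auto
    define y where "y i = (if i \<le> j then x i else x (Suc i))" for i
    have "\<forall>i<m. y i < y (Suc i)"
      using strict_chain_remove_point[OF Suc.prems(1) j(1)] unfolding y_def .
    moreover have "y 0 = x 0" "y m = x (Suc m)" using j(1) by (auto simp: y_def)
    ultimately have IH: "norm ((\<Sum>i<m. chord (y i) (y (Suc i))) - chord (x 0) (x (Suc m)))
        \<le> S * (\<Sum>k=1..m-1. (2 * ?\<omega> / real k) powr \<theta>)"
      using Suc.IH[of y] Suc.prems by simp
    let ?D = "chord (x j) (x (Suc j)) + chord (x (Suc j)) (x (Suc (Suc j))) - chord (x j) (x (Suc (Suc j)))"
    have "norm ?D \<le> S * tri_pow (x j) (x (Suc (Suc j))) powr \<theta>"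
      using Suc.prems le[of 0 j] le[of j "Suc j"] le[of "Suc j" "Suc (Suc j)"] le[of "Suc (Suc j)" "Suc m"] j(1)
      by (intro three_point) auto
    also have "\<dots> \<le> S * (2 * ?\<omega> / m) powr \<theta>"
      using j(2) theta_gt_1 S_nonneg by (intro mult_left_mono powr_mono2) (auto simp: tri_pow_nonneg)
    finally have step: "norm ?D \<le> S * (2 * ?\<omega> / m) powr \<theta>" .
    have sums: "(\<Sum>i<Suc m. chord (x i) (x (Suc i))) = (\<Sum>i<m. chord (y i) (y (Suc i))) + ?D"
      using sum_remove_point[OF j(1), of chord x] unfolding y_def .
    have "norm ((\<Sum>i<Suc m. chord (x i) (x (Suc i))) - chord (x 0) (x (Suc m)))
        = norm (((\<Sum>i<m. chord (y i) (y (Suc i))) - chord (x 0) (x (Suc m))) + ?D)"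
      unfolding sums by (simp add: algebra_simps)
    also have "\<dots> \<le> S * (\<Sum>k=1..m-1. (2 * ?\<omega> / real k) powr \<theta>) + S * (2 * ?\<omega> / m) powr \<theta>"
      by (rule order_trans[OF norm_triangle_ineq add_mono[OF IH step]])
    also have "\<dots> = S * (\<Sum>k=1..m. (2 * ?\<omega> / real k) powr \<theta>)"
      using False by (cases m) (auto simp: algebra_simps)
    finally show ?thesis by simp
  qed (use Suc.prems in simp)
qed (simp add: chord_self)

definition sewing_const :: real where
  "sewing_const = S * 2 powr \<theta> * zeta_real \<theta>"

lemma sewing_const_nonneg: "0 \<le> sewing_const"
  using S_nonneg zeta_real_nonneg[OF theta_gt_1] by (simp add: sewing_const_def)

lemma sewing_bound:
  assumes "\<forall>i<n. x i < x (Suc i)" "0 \<le> x 0" "x n \<le> 1"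
  shows "norm ((\<Sum>i<n. chord (x i) (x (Suc i))) - chord (x 0) (x n)) \<le> sewing_const * control (x 0) (x n) powr \<theta>"
proof -
  let ?\<omega> = "control (x 0) (x n)"
  have "0 \<le> ?\<omega>" using control_nonneg assms strict_chain_le[OF assms(1), of 0 n] by simp
  have "(\<Sum>k=1..n-1. (2 * ?\<omega> / real k) powr \<theta>) = (2 * ?\<omega>) powr \<theta> * (\<Sum>k=1..n-1. 1 / real k powr \<theta>)"
    by (simp add: powr_divide sum_distrib_left)
  also have "\<dots> \<le> (2 * ?\<omega>) powr \<theta> * zeta_real \<theta>"
    using zeta_real_partial_le[OF theta_gt_1] by (intro mult_left_mono) auto
  also have "\<dots> = 2 powr \<theta> * ?\<omega> powr \<theta> * zeta_real \<theta>"
    using \<open>0 \<le> ?\<omega>\<close> by (simp add: powr_mult)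
  finally have "S * (\<Sum>k=1..n-1. (2 * ?\<omega> / real k) powr \<theta>) \<le> sewing_const * ?\<omega> powr \<theta>"
    using S_nonneg by (auto simp: sewing_const_def algebra_simps intro: mult_left_mono[THEN order_trans])
  then show ?thesis using sewing_sum_bound[OF assms] by linarith
qed

lemma norm_chain_sum_chord_sub_le:
  assumes "is_partition s t F" "0 \<le> s" "t \<le> 1"
  shows "norm (chain_sum chord F - chord s t) \<le> sewing_const * control s t powr \<theta>"
proof -
  obtain xs where xs: "sorted_wrt (<) xs" "set xs = F"
    using assms(1) finite_set_strict_sorted[of F] unfolding is_partition_def by blast
  then have "xs \<noteq> []" using assms(1) by (auto simp: is_partition_def)
  have "hd xs \<in> {s..t}" "last xs \<in> {s..t}"
    using xs(2) assms(1) hd_in_set[OF \<open>xs \<noteq> []\<close>] last_in_set[OF \<open>xs \<noteq> []\<close>]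
    by (auto simp: is_partition_def)
  moreover have "hd xs \<le> s" "t \<le> last xs"
    using sorted_hd_le_le_last[OF xs(1)] xs(2) assms(1) by (auto simp: is_partition_def)
  ultimately have "hd xs = s" "last xs = t" by auto
  then have "xs ! 0 = s" "xs ! (length xs - 1) = t"
    using \<open>xs \<noteq> []\<close> by (simp_all add: hd_conv_nth last_conv_nth)
  moreover have "chain_sum chord F = (\<Sum>i<length xs - 1. chord (xs ! i) (xs ! Suc i))"
    using xs \<open>xs \<noteq> []\<close> by (metis sum_list_intervals_conv_sum_nth sum_list_intervals_eq_chain_sum)
  moreover have "\<forall>i<length xs - 1. xs ! i < xs ! Suc i"
    using xs(1) by (auto simp: sorted_wrt_iff_nth_less)
  ultimately show ?thesis
    using sewing_bound[of "length xs - 1" "\<lambda>i. xs ! i"] assms by simp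
qed

section \<open>Interpolation sums and their limit\<close>

text \<open>A on the part of the interpolating segment over [a, b] that is traversed before time t.\<close>
definition interp_piece :: "real \<Rightarrow> real \<Rightarrow> real \<Rightarrow> 'e" where
  "interp_piece t a b = (if b \<le> t then chord a b
     else if a < t then A (\<gamma> a, ((t - a) / (b - a)) *\<^sub>R tdiff (\<gamma> b) (\<gamma> a)) else 0)"

text \<open>The vertices of the interpolated path stopped at time t.\<close>
definition points_upto :: "real list \<Rightarrow> real \<Rightarrow> real set" where
  "points_upto D t = insert t {x\<in>set D. x \<le> t}"

lemma interp_sum_eq_chain_sum:
  assumes "partition01 D"
  shows "interp_sum A \<gamma> D t = chain_sum (interp_piece t) (set D)"
proof -
  have "interp_sum A \<gamma> D t = sum_list (map (\<lambda>(a, b). interp_piece t a b) (intervals D))"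
    unfolding interp_sum_def interp_piece_def chord_def by (auto intro!: arg_cong[where f=sum_list])
  then show ?thesis
    using assms by (simp add: sum_list_intervals_eq_chain_sum partition01_sorted partition01_nonempty)
qed

lemma chain_sum_interp_piece_lower:
  "finite F \<Longrightarrow> c \<le> t \<Longrightarrow> chain_sum (interp_piece t) {x\<in>F. x \<le> c} = chain_sum chord {x\<in>F. x \<le> c}"
  by (intro chain_sum_cong) (auto simp: interp_piece_def consecutive_def)

lemma chain_sum_interp_piece_upper:
  "finite F \<Longrightarrow> t \<le> c \<Longrightarrow> chain_sum (interp_piece t) {x\<in>F. c \<le> x} = 0"
  using chain_sum_cong[of "{x\<in>F. c \<le> x}" "interp_piece t" "\<lambda>_ _. 0"]
  by (auto simp: interp_piece_def consecutive_def chain_sum_def)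

lemma chain_sum_interp_piece_mem:
  assumes "finite F" "t \<in> F"
  shows "chain_sum (interp_piece t) F = chain_sum chord {x\<in>F. x \<le> t}"
  using chain_sum_split[OF assms, of "interp_piece t"] assms
  by (simp add: chain_sum_interp_piece_lower chain_sum_interp_piece_upper)

lemma norm_interp_piece_le:
  assumes "0 \<le> p" "p < t" "t < q" "q \<le> 1"
  shows "norm (interp_piece t p q) \<le> G * tdist (\<gamma> p) (\<gamma> q) powr \<eta>"
proof -
  define l where "l = (t - p) / (q - p)"
  have l: "0 \<le> l" "l \<le> 1" using assms by (auto simp: l_def divide_simps)
  have pq: "p \<in> {0..1}" "q \<in> {0..1}" using assms by auto
  have v: "norm (l *\<^sub>R tdiff (\<gamma> q) (\<gamma> p)) \<le> tdist (\<gamma> p) (\<gamma> q)"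
    using l by (simp add: norm_tdiff mult_left_le_one_le)
  have "norm (interp_piece t p q) = norm (A (\<gamma> p, l *\<^sub>R tdiff (\<gamma> q) (\<gamma> p)))"
    using assms by (simp add: interp_piece_def l_def)
  also have "\<dots> \<le> G * norm (l *\<^sub>R tdiff (\<gamma> q) (\<gamma> p)) powr \<eta>"
    using tdist_path_le[OF pq] v
    by (intro norm_le_gr_norm[OF gr_norm_eq A_Omega path_in_torus[OF pq(1)]]) auto
  also have "\<dots> \<le> G * tdist (\<gamma> p) (\<gamma> q) powr \<eta>"
    using v eta_pos G_nonneg by (intro mult_left_mono powr_mono2) auto
  finally show ?thesis .
qed

lemma is_partition_points_upto: "partition01 D \<Longrightarrow> t \<in> {0..1} \<Longrightarrow> is_partition 0 t (points_upto D t)"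
  using partition01_is_partition[of D] by (auto simp: points_upto_def is_partition_def)

lemma consecutive_points_upto_le_mesh:
  assumes D: "partition01 D" and t: "t \<in> {0..1}" and ab: "consecutive (points_upto D t) a b"
  shows "b - a \<le> mesh D"
proof -
  have P: "is_partition 0 1 (set D)" using partition01_is_partition[OF D] .
  have a: "a \<in> set D" "a < t" "b \<le> t" using ab by (auto simp: consecutive_def points_upto_def)
  then have "a < Max (set D)" using P t by (auto simp: is_partition_def intro: order.strict_trans2)
  then have n: "consecutive (set D) a (next_in (set D) a)"
    using P a by (intro consecutive_next_in) (auto simp: is_partition_def)
  have "b \<le> next_in (set D) a"
  proof (cases "next_in (set D) a \<le> t")
    case True
    then have "next_in (set D) a \<in> points_upto D t" using n by (auto simp: points_upto_def consecutive_def)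
    then show ?thesis using ab n by (auto simp: consecutive_def)
  qed (use a in auto)
  then show ?thesis using consecutive_le_mesh[OF D n] by simp
qed

lemma interp_sum_sub_chain_sum_straddle:
  assumes D: "partition01 D" and pq: "consecutive (set D) p q" "p < t" "t < q"
  shows "interp_sum A \<gamma> D t - chain_sum chord (points_upto D t) = interp_piece t p q - chord p t"
proof -
  have fin: "finite (set D)" by simp
  have lower: "{x\<in>set D. x \<le> t} = {x\<in>set D. x \<le> p}" "{x\<in>set D. x \<le> p} \<noteq> {}"
    "Max {x\<in>set D. x \<le> p} = p"
    using pq by (auto simp: consecutive_def intro!: Max_eqI)
  then have "chain_sum chord (points_upto D t) = chain_sum chord {x\<in>set D. x \<le> p} + chord p t"
    using pq chain_sum_insert_Max[of "{x\<in>set D. x \<le> p}" t chord] by (simp add: points_upto_def)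
  moreover have "interp_sum A \<gamma> D t = chain_sum chord {x\<in>set D. x \<le> p} + interp_piece t p q + 0"
    using chain_sum_split_consecutive[OF fin pq(1), of "interp_piece t"] pq D
    by (simp add: interp_sum_eq_chain_sum chain_sum_interp_piece_lower chain_sum_interp_piece_upper)
  ultimately show ?thesis by simp
qed

lemma norm_interp_sum_sub_chain_sum_le:
  assumes D: "partition01 D" "mesh D < \<delta>" and t: "t \<in> {0..1}"
    and close: "\<And>s u. s \<in> {0..1} \<Longrightarrow> u \<in> {0..1} \<Longrightarrow> \<bar>s - u\<bar> < \<delta> \<Longrightarrow> tdist (\<gamma> s) (\<gamma> u) < e"
  shows "norm (interp_sum A \<gamma> D t - chain_sum chord (points_upto D t)) \<le> 2 * (G * e powr \<eta>)"
proof -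
  have P: "is_partition 0 1 (set D)" using partition01_is_partition[OF D(1)] .
  then have fin: "finite (set D)" by (simp add: is_partition_def)
  show ?thesis
  proof (cases "t \<in> set D")
    case True
    then show ?thesis
      using G_nonneg chain_sum_interp_piece_mem[OF fin True] D(1)
      by (simp add: interp_sum_eq_chain_sum points_upto_def insert_absorb)
  next
    case False
    then have "0 < t" "t < 1" using P t by (auto simp: is_partition_def order.order_iff_strict)
    then obtain p q where pq: "consecutive (set D) p q" "p < t" "t < q"
      using consecutive_around[OF fin _ _ _ _ False] P by (metis is_partition_def)
    have range: "0 \<le> p" "q \<le> 1" using P pq by (auto simp: is_partition_def consecutive_def)
    have "q - p < \<delta>" using consecutive_le_mesh[OF D(1) pq(1)] D(2) by simp
    then have "tdist (\<gamma> p) (\<gamma> q) < e" "tdist (\<gamma> p) (\<gamma> t) < e"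
      using close pq range t by auto
    then have "G * tdist (\<gamma> p) (\<gamma> q) powr \<eta> \<le> G * e powr \<eta>"
      "G * tdist (\<gamma> p) (\<gamma> t) powr \<eta> \<le> G * e powr \<eta>"
      using G_nonneg eta_pos by (auto intro!: mult_left_mono powr_mono2)
    moreover have "norm (interp_piece t p q) \<le> G * tdist (\<gamma> p) (\<gamma> q) powr \<eta>"
      using norm_interp_piece_le[OF range(1) pq(2,3) range(2)] .
    moreover have "norm (chord p t) \<le> G * tdist (\<gamma> p) (\<gamma> t) powr \<eta>"
      using norm_chord_le[of p t] range t pq by simp
    ultimately show ?thesis
      using interp_sum_sub_chain_sum_straddle[OF D(1) pq] norm_triangle_ineq4[of "interp_piece t p q" "chord p t"]
      by simp
  qed
qed

lemma chain_sum_control_le: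
  assumes "is_partition s t F" "0 \<le> s" "t \<le> 1"
  shows "chain_sum control F \<le> control s t"
  using assms
proof (induction rule: is_partition_induct)
  case (single s)
  then show ?case using control_self by simp
next
  case (snoc s m t F)
  have "s \<le> m" "m < t" using snoc by (auto simp: is_partition_def consecutive_def)
  then have "chain_sum control F \<le> control s m + control m t"
    using snoc chain_sum_snoc[OF snoc.hyps(1,2), of control] by simp
  also have "\<dots> \<le> control s t" using snoc \<open>s \<le> m\<close> \<open>m < t\<close> by (intro control_superadditive) auto
  finally show ?case .
qed

text \<open>Apply the sewing bound on each piece of F, and use \<omega>^\<theta> \<le> e^(\<theta> - 1) \<omega> for \<omega> \<le> e.\<close>
lemma norm_chain_sum_refine_le:
  assumes F: "is_partition s t F" and R: "is_partition s t R" "F \<subseteq> R" and st: "0 \<le> s" "t \<le> 1"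
    and small: "\<And>a b. consecutive F a b \<Longrightarrow> control a b \<le> e"
  shows "norm (chain_sum chord R - chain_sum chord F) \<le> sewing_const * e powr (\<theta> - 1) * W"
proof -
  have fin: "finite F" using F by (simp add: is_partition_def)
  have range: "s \<le> a" "b \<le> t" "a < b" if "consecutive F a b" for a b
    using that F by (auto simp: consecutive_def is_partition_def)
  let ?R = "\<lambda>a b. {x\<in>R. a \<le> x \<and> x \<le> b}"
  have "norm (chain_sum chord R - chain_sum chord F)
      = norm (chain_sum (\<lambda>a b. chain_sum chord (?R a b) - chord a b) F)"
    using chain_sum_refine[OF F R, of chord] by (simp add: chain_sum_diff)
  also have "\<dots> \<le> chain_sum (\<lambda>a b. norm (chain_sum chord (?R a b) - chord a b)) F"
    by (rule norm_chain_sum_le)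
  also have "\<dots> \<le> chain_sum (\<lambda>a b. (sewing_const * e powr (\<theta> - 1)) * control a b) F"
  proof (rule chain_sum_mono[OF fin])
    fix a b assume ab: "consecutive F a b"
    have "is_partition a b (?R a b)" using ab R by (auto simp: is_partition_def consecutive_def)
    then have "norm (chain_sum chord (?R a b) - chord a b) \<le> sewing_const * control a b powr \<theta>"
      using range[OF ab] st by (intro norm_chain_sum_chord_sub_le) auto
    also have "control a b powr \<theta> \<le> e powr (\<theta> - 1) * control a b"
      using small[OF ab] range[OF ab] st theta_gt_1
      by (intro powr_le_powr_sub_1_mult control_nonneg) auto
    finally show "norm (chain_sum chord (?R a b) - chord a b) \<le> (sewing_const * e powr (\<theta> - 1)) * control a b"
      using sewing_const_nonneg by (simp add: mult_left_mono mult.assoc)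
  qed
  also have "\<dots> = (sewing_const * e powr (\<theta> - 1)) * chain_sum control F"
    by (rule chain_sum_const_mult)
  also have "\<dots> \<le> (sewing_const * e powr (\<theta> - 1)) * W"
    using chain_sum_control_le[OF F st] control_le_W[of s t] F st sewing_const_nonneg
    by (intro mult_left_mono) (auto simp: is_partition_def)
  finally show ?thesis .
qed

lemma norm_interp_sum_sub_refinement_le:
  assumes D: "partition01 D" "mesh D < \<delta>" and t: "t \<in> {0..1}"
    and R: "is_partition 0 t R" "points_upto D t \<subseteq> R"
    and small: "\<And>a b. 0 \<le> a \<Longrightarrow> a \<le> b \<Longrightarrow> b \<le> 1 \<Longrightarrow> b - a < \<delta> \<Longrightarrow> control a b < e1"
    and close: "\<And>s u. s \<in> {0..1} \<Longrightarrow> u \<in> {0..1} \<Longrightarrow> \<bar>s - u\<bar> < \<delta> \<Longrightarrow> tdist (\<gamma> s) (\<gamma> u) < e2"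
  shows "norm (interp_sum A \<gamma> D t - chain_sum chord R)
    \<le> 2 * (G * e2 powr \<eta>) + sewing_const * e1 powr (\<theta> - 1) * W"
proof -
  have P: "is_partition 0 t (points_upto D t)" using is_partition_points_upto[OF D(1) t] .
  have "control a b \<le> e1" if ab: "consecutive (points_upto D t) a b" for a b
  proof -
    have "0 \<le> a" "a \<le> b" "b \<le> 1" using ab P t by (auto simp: consecutive_def is_partition_def)
    moreover have "b - a < \<delta>" using consecutive_points_upto_le_mesh[OF D(1) t ab] D(2) by simp
    ultimately show ?thesis using small by (simp add: less_imp_le)
  qed
  then have "norm (chain_sum chord R - chain_sum chord (points_upto D t)) \<le> sewing_const * e1 powr (\<theta> - 1) * W"
    using t by (intro norm_chain_sum_refine_le[OF P R]) auto
  moreover have "norm (interp_sum A \<gamma> D t - chain_sum chord (points_upto D t)) \<le> 2 * (G * e2 powr \<eta>)"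
    using norm_interp_sum_sub_chain_sum_le[OF D t close] .
  ultimately show ?thesis
    using norm_triangle_ineq4[of "interp_sum A \<gamma> D t - chain_sum chord (points_upto D t)"
        "chain_sum chord R - chain_sum chord (points_upto D t)"]
    by (simp add: algebra_simps)
qed

lemma interp_sum_near_refinements:
  assumes t: "t \<in> {0..1}" and "0 < \<epsilon>"
  obtains \<delta> where "0 < \<delta>" "\<And>D R. partition01 D \<Longrightarrow> mesh D < \<delta> \<Longrightarrow> is_partition 0 t R
    \<Longrightarrow> points_upto D t \<subseteq> R \<Longrightarrow> norm (interp_sum A \<gamma> D t - chain_sum chord R) \<le> \<epsilon>"
proof -
  obtain e1 where e1: "0 < e1" "(sewing_const * W) * e1 powr (\<theta> - 1) \<le> \<epsilon>/2"
    using exists_small_powr[of "sewing_const * W" "\<theta> - 1" "\<epsilon>/2"]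
      sewing_const_nonneg W_nonneg theta_gt_1 \<open>0 < \<epsilon>\<close> by auto
  obtain e2 where e2: "0 < e2" "G * e2 powr \<eta> \<le> \<epsilon>/4"
    using exists_small_powr[of G \<eta> "\<epsilon>/4"] G_nonneg eta_pos \<open>0 < \<epsilon>\<close> by auto
  obtain \<delta>1 where \<delta>1: "0 < \<delta>1" "\<And>a b. 0 \<le> a \<Longrightarrow> a \<le> b \<Longrightarrow> b \<le> 1 \<Longrightarrow> b - a < \<delta>1 \<Longrightarrow> control a b < e1"
    using control_uniformly_small[OF e1(1)] by blast
  obtain \<delta>2 where \<delta>2: "0 < \<delta>2"
    "\<And>s u. s \<in> {0..1} \<Longrightarrow> u \<in> {0..1} \<Longrightarrow> \<bar>s - u\<bar> < \<delta>2 \<Longrightarrow> tdist (\<gamma> s) (\<gamma> u) < e2"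
    using path_uniformly_continuous[OF e2(1)] by blast
  show ?thesis
  proof (rule that[of "min \<delta>1 \<delta>2"])
    show "0 < min \<delta>1 \<delta>2" using \<delta>1 \<delta>2 by simp
    fix D R assume D: "partition01 D" "mesh D < min \<delta>1 \<delta>2" and R: "is_partition 0 t R" "points_upto D t \<subseteq> R"
    have "norm (interp_sum A \<gamma> D t - chain_sum chord R)
        \<le> 2 * (G * e2 powr \<eta>) + sewing_const * e1 powr (\<theta> - 1) * W"
      using \<delta>1(2) \<delta>2(2) by (intro norm_interp_sum_sub_refinement_le[OF D t R]) auto
    also have "\<dots> \<le> \<epsilon>" using e1(2) e2(2) by (simp add: algebra_simps)
    finally show "norm (interp_sum A \<gamma> D t - chain_sum chord R) \<le> \<epsilon>" .
  qed
qed

lemma interp_sum_cauchy: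
  assumes t: "t \<in> {0..1}" and "0 < \<epsilon>"
  obtains \<delta> where "0 < \<delta>" "\<And>D1 D2. partition01 D1 \<Longrightarrow> partition01 D2 \<Longrightarrow> mesh D1 < \<delta> \<Longrightarrow> mesh D2 < \<delta>
    \<Longrightarrow> norm (interp_sum A \<gamma> D1 t - interp_sum A \<gamma> D2 t) < \<epsilon>"
proof -
  obtain \<delta> where \<delta>: "0 < \<delta>" "\<And>D R. partition01 D \<Longrightarrow> mesh D < \<delta> \<Longrightarrow> is_partition 0 t R
    \<Longrightarrow> points_upto D t \<subseteq> R \<Longrightarrow> norm (interp_sum A \<gamma> D t - chain_sum chord R) \<le> \<epsilon>/3"
    using interp_sum_near_refinements[OF t, of "\<epsilon>/3"] \<open>0 < \<epsilon>\<close> by auto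
  show ?thesis
  proof (rule that[OF \<delta>(1)])
    fix D1 D2 assume D: "partition01 D1" "partition01 D2" "mesh D1 < \<delta>" "mesh D2 < \<delta>"
    let ?R = "points_upto D1 t \<union> points_upto D2 t"
    have R: "is_partition 0 t ?R"
      using is_partition_points_upto[OF D(1) t] is_partition_points_upto[OF D(2) t]
      by (auto simp: is_partition_def)
    have "norm (interp_sum A \<gamma> D1 t - interp_sum A \<gamma> D2 t)
        \<le> norm (interp_sum A \<gamma> D1 t - chain_sum chord ?R) + norm (interp_sum A \<gamma> D2 t - chain_sum chord ?R)"
      using norm_triangle_ineq4[of "interp_sum A \<gamma> D1 t - chain_sum chord ?R"
          "interp_sum A \<gamma> D2 t - chain_sum chord ?R"] by simp
    also have "\<dots> \<le> \<epsilon>/3 + \<epsilon>/3" using \<delta>(2) D R by (intro add_mono) auto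
    finally show "norm (interp_sum A \<gamma> D1 t - interp_sum A \<gamma> D2 t) < \<epsilon>" using \<open>0 < \<epsilon>\<close> by simp
  qed
qed

lemma interp_sum_tendsto_gammaA:
  assumes "t \<in> {0..1}"
  shows "((\<lambda>D. interp_sum A \<gamma> D t) \<longlongrightarrow> gammaA A \<gamma> t) fine_partitions"
proof -
  have cauchy: "cauchy_filter (filtermap (\<lambda>D. interp_sum A \<gamma> D t) fine_partitions)"
    unfolding cauchy_filter_metric_filtermap
  proof (intro allI impI)
    fix e :: real assume "0 < e"
    then obtain \<delta> where "0 < \<delta>" "\<And>D1 D2. partition01 D1 \<Longrightarrow> partition01 D2 \<Longrightarrow> mesh D1 < \<delta>
        \<Longrightarrow> mesh D2 < \<delta> \<Longrightarrow> norm (interp_sum A \<gamma> D1 t - interp_sum A \<gamma> D2 t) < e"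
      using interp_sum_cauchy[OF assms] by blast
    then show "\<exists>P. eventually P fine_partitions
        \<and> (\<forall>D1 D2. P D1 \<and> P D2 \<longrightarrow> dist (interp_sum A \<gamma> D1 t) (interp_sum A \<gamma> D2 t) < e)"
      by (intro exI[of _ "\<lambda>D. partition01 D \<and> mesh D < \<delta>"]) (auto simp: eventually_fine_partitions dist_norm)
  qed
  then obtain L where "filtermap (\<lambda>D. interp_sum A \<gamma> D t) fine_partitions \<le> nhds L"
    using cauchy_filter_complete_converges[OF cauchy complete_UNIV] fine_partitions_neq_bot
    by (auto simp: filtermap_bot_iff)
  then have "((\<lambda>D. interp_sum A \<gamma> D t) \<longlongrightarrow> L) fine_partitions" by (simp add: filterlim_def)
  then show ?thesis using gammaA_eqI by metis
qed

lemma interp_sum_diff_eq_chain_sum: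
  assumes "partition01 D" "s \<in> set D" "t \<in> set D" "s \<le> t"
  shows "interp_sum A \<gamma> D t - interp_sum A \<gamma> D s = chain_sum chord {x\<in>set D. s \<le> x \<and> x \<le> t}"
proof -
  have fin: "finite (set D)" by simp
  have "{y\<in>{x\<in>set D. x \<le> t}. y \<le> s} = {x\<in>set D. x \<le> s}"
    "{y\<in>{x\<in>set D. x \<le> t}. s \<le> y} = {x\<in>set D. s \<le> x \<and> x \<le> t}"
    using assms by auto
  then have "chain_sum chord {x\<in>set D. x \<le> t}
      = chain_sum chord {x\<in>set D. x \<le> s} + chain_sum chord {x\<in>set D. s \<le> x \<and> x \<le> t}"
    using chain_sum_split[of "{x\<in>set D. x \<le> t}" s chord] assms by simp
  then show ?thesis
    using assms by (simp add: interp_sum_eq_chain_sum chain_sum_interp_piece_mem)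
qed

lemma norm_gammaA_increment_le:
  assumes "0 \<le> s" "s \<le> t" "t \<le> 1"
  shows "norm (gammaA A \<gamma> t - gammaA A \<gamma> s - chord s t) \<le> sewing_const * control s t powr \<theta>"
proof -
  let ?F = "inf fine_partitions (principal {D. s \<in> set D \<and> t \<in> set D})"
  have "?F \<noteq> bot"
  proof
    assume "?F = bot"
    then have "eventually (\<lambda>_. False) ?F" by simp
    then obtain \<delta> where "0 < \<delta>" "\<And>D. partition01 D \<Longrightarrow> mesh D < \<delta> \<Longrightarrow> s \<in> set D \<Longrightarrow> t \<in> set D \<Longrightarrow> False"
      unfolding eventually_inf_principal eventually_fine_partitions by auto
    then show False using fine_partition_exists[of \<delta> "{s, t}"] assms by auto
  qed
  moreover have "((\<lambda>D. interp_sum A \<gamma> D u) \<longlongrightarrow> gammaA A \<gamma> u) ?F" if "u \<in> {0..1}" for u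
    using interp_sum_tendsto_gammaA[OF that] by (rule tendsto_mono[rotated]) simp
  then have "((\<lambda>D. interp_sum A \<gamma> D t - interp_sum A \<gamma> D s - chord s t)
      \<longlongrightarrow> gammaA A \<gamma> t - gammaA A \<gamma> s - chord s t) ?F"
    using assms by (intro tendsto_diff tendsto_const) auto
  moreover have "eventually (\<lambda>D. norm (interp_sum A \<gamma> D t - interp_sum A \<gamma> D s - chord s t)
      \<le> sewing_const * control s t powr \<theta>) ?F"
    unfolding eventually_inf_principal eventually_fine_partitions
  proof (intro exI[of _ 1] conjI allI impI)
    fix D assume D: "partition01 D" "mesh D < 1" "D \<in> {D. s \<in> set D \<and> t \<in> set D}"
    have "is_partition s t {x\<in>set D. s \<le> x \<and> x \<le> t}" using D assms by (auto simp: is_partition_def)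
    then show "norm (interp_sum A \<gamma> D t - interp_sum A \<gamma> D s - chord s t) \<le> sewing_const * control s t powr \<theta>"
      using norm_chain_sum_chord_sub_le assms D by (simp add: interp_sum_diff_eq_chain_sum)
  qed simp
  ultimately show ?thesis by (rule Lim_norm_ubound)
qed

lemma norm_gammaA_diff_le:
  assumes "0 \<le> s" "s \<le> t" "t \<le> 1"
  shows "dist (gammaA A \<gamma> s) (gammaA A \<gamma> t) \<le> G * tdist (\<gamma> s) (\<gamma> t) powr \<eta> + sewing_const * control s t powr \<theta>"
  using norm_gammaA_increment_le[OF assms] norm_chord_le[of s t] assms
    norm_triangle_ineq[of "gammaA A \<gamma> t - gammaA A \<gamma> s - chord s t" "chord s t"]
  by (simp add: dist_norm norm_minus_commute)

lemma chain_sum_control_powr_le: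
  assumes "partition01 D"
  shows "chain_sum (\<lambda>a b. control a b powr \<theta>) (set D) \<le> W powr \<theta>"
proof -
  have P: "is_partition 0 1 (set D)" using partition01_is_partition[OF assms] .
  then have range: "0 \<le> x" "next_in (set D) x \<le> 1" "x \<le> next_in (set D) x" if "x \<in> set D - {Max (set D)}" for x
    using that consecutive_next_in[of "set D" x] less_Max_if_ne[of "set D" x]
    by (auto simp: is_partition_def consecutive_def)
  have "chain_sum (\<lambda>a b. control a b powr \<theta>) (set D) \<le> chain_sum control (set D) powr \<theta>"
    unfolding chain_sum_def using theta_gt_1 range
    by (intro sum_powr_le_powr_sum control_nonneg) auto
  also have "\<dots> \<le> W powr \<theta>"
    using chain_sum_control_le[OF P] control_le_W[of 0 1] theta_gt_1 range
    by (intro powr_mono2) (auto simp: chain_sum_def intro!: sum_nonneg control_nonneg)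
  finally show ?thesis .
qed

lemma pvar_sum_gammaA_le:
  assumes p: "1 \<le> p" "1 \<le> p * \<eta>" and D: "partition01 D"
  shows "(sum_list (map (\<lambda>(s, t). dist (gammaA A \<gamma> s) (gammaA A \<gamma> t) powr p) (intervals D))) powr (1/p)
    \<le> G * (sum_list (map (\<lambda>(s, t). tdist (\<gamma> s) (\<gamma> t) powr (p * \<eta>)) (intervals D))) powr (1/p)
      + sewing_const * W powr \<theta>"
proof -
  let ?F = "set D"
  let ?I = "?F - {Max ?F}" and ?n = "next_in ?F"
  have P: "is_partition 0 1 ?F" using partition01_is_partition[OF D] .
  have sums: "sum_list (map (\<lambda>(s, t). f s t) (intervals D)) = (\<Sum>x\<in>?I. f x (?n x))" for f :: "real \<Rightarrow> real \<Rightarrow> real"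
    using D by (simp add: sum_list_intervals_eq_chain_sum partition01_sorted partition01_nonempty chain_sum_def)
  have range: "0 \<le> x" "x \<le> ?n x" "?n x \<le> 1" if "x \<in> ?I" for x
    using that P consecutive_next_in[of ?F x] less_Max_if_ne[of ?F x]
    by (auto simp: is_partition_def consecutive_def)
  define a where "a x = G * tdist (\<gamma> x) (\<gamma> (?n x)) powr \<eta>" for x
  define b where "b x = sewing_const * control x (?n x) powr \<theta>" for x
  have ab: "0 \<le> a x" "0 \<le> b x" for x using G_nonneg sewing_const_nonneg by (simp_all add: a_def b_def)
  have "(\<Sum>x\<in>?I. dist (gammaA A \<gamma> x) (gammaA A \<gamma> (?n x)) powr p) powr (1/p)
      \<le> (\<Sum>x\<in>?I. (a x + b x) powr p) powr (1/p)"
    using range p unfolding a_def b_def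
    by (intro powr_mono2 sum_mono norm_gammaA_diff_le) (auto intro!: sum_nonneg)
  also have "\<dots> \<le> (\<Sum>x\<in>?I. a x powr p) powr (1/p) + (\<Sum>x\<in>?I. b x powr p) powr (1/p)"
    using ab p by (intro minkowski_inequality_sum) auto
  also have "(\<Sum>x\<in>?I. a x powr p) powr (1/p)
      = G * (\<Sum>x\<in>?I. tdist (\<gamma> x) (\<gamma> (?n x)) powr (p * \<eta>)) powr (1/p)"
    using G_nonneg p
    by (simp add: a_def powr_mult powr_powr sum_distrib_left[symmetric] sum_nonneg mult.commute)
  also have "(\<Sum>x\<in>?I. b x powr p) powr (1/p) \<le> ((\<Sum>x\<in>?I. b x) powr p) powr (1/p)"
    using ab p by (intro powr_mono2 sum_powr_le_powr_sum) (auto intro!: sum_nonneg)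
  also have "\<dots> = (\<Sum>x\<in>?I. b x)" using ab p by (simp add: powr_powr sum_nonneg)
  also have "\<dots> = sewing_const * chain_sum (\<lambda>a b. control a b powr \<theta>) ?F"
    by (simp add: b_def chain_sum_def sum_distrib_left)
  also have "\<dots> \<le> sewing_const * W powr \<theta>"
    using chain_sum_control_powr_le[OF D] sewing_const_nonneg by (rule mult_left_mono)
  finally show ?thesis by (simp add: sums)
qed


lemma pvar_gammaA_le:
  assumes p: "1 \<le> p" "1 \<le> p * \<eta>"
  shows "pvar dist (gammaA A \<gamma>) p
    \<le> gr_norm \<eta> A * epowr (pvar tdist \<gamma> (p * \<eta>)) \<eta> + ereal (sewing_const * W powr \<theta>)"
proof (rule pvar_le)
  fix D assume D: "partition01 D"
  let ?T = "sum_list (map (\<lambda>(s, t). tdist (\<gamma> s) (\<gamma> t) powr (p * \<eta>)) (intervals D))"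
  let ?V = "sum_list (map (\<lambda>(s, t). dist (gammaA A \<gamma> s) (gammaA A \<gamma> t) powr p) (intervals D))"
  have "ereal (?V powr (1/p)) \<le> ereal (G * ?T powr (1/p)) + ereal (sewing_const * W powr \<theta>)"
    using pvar_sum_gammaA_le[OF p D] by simp
  also have "ereal (G * ?T powr (1/p)) \<le> gr_norm \<eta> A * epowr (pvar tdist \<gamma> (p * \<eta>)) \<eta>"
    using ereal_le_mult_epowr_pvar[OF G_nonneg eta_pos _ D, of "p * \<eta>" tdist \<gamma>] p gr_norm_eq eta_pos
    by simp
  finally show "ereal (?V powr (1/p))
      \<le> gr_norm \<eta> A * epowr (pvar tdist \<gamma> (p * \<eta>)) \<eta> + ereal (sewing_const * W powr \<theta>)"
    by (simp add: add_right_mono)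
qed (use p in simp)
end

theorem corollary3p19:
  fixes \<alpha> \<alpha>' \<eta> p :: real
    and \<gamma> :: "real \<Rightarrow> real^2"
    and A :: "(real^2) \<times> (real^2) \<Rightarrow> 'e::banach"
  assumes "0 \<le> \<alpha>" "\<alpha> < \<alpha>'" "\<alpha>' \<le> 1"
    and "0 < \<eta>" "\<eta> \<le> 1" "p \<ge> 1 / \<eta>"
    and "torus_path \<gamma>" "alpha_var \<alpha> \<gamma> < \<infinity>"
    and "A \<in> Omega" "symm_norm \<alpha>' A + gr_norm \<eta> A < \<infinity>"
  shows "pvar dist (gammaA A \<gamma>) p
     \<le> gr_norm \<eta> A * epowr (pvar tdist \<gamma> (p * \<eta>)) \<eta>
       + ereal (2 powr (\<alpha>' / \<alpha>) * zeta_real (\<alpha>' / \<alpha>)) * symm_norm \<alpha>' A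
         * epowr (alpha_var \<alpha> \<gamma>) (\<alpha>' / \<alpha>)"
proof -
  have "0 < \<alpha>" using assms(1,8) alpha_var_zero[of \<gamma>] by (cases "\<alpha> = 0") auto
  obtain S G where SG: "symm_norm \<alpha>' A = ereal S" "gr_norm \<eta> A = ereal G"
    using assms(10) symm_norm_nonneg[of \<alpha>' A] gr_norm_nonneg[of \<eta> A]
    by (cases "symm_norm \<alpha>' A"; cases "gr_norm \<eta> A") auto
  obtain W where W: "alpha_var \<alpha> \<gamma> = ereal W"
    using assms(8) alpha_var_nonneg[of \<alpha> \<gamma>] by (cases "alpha_var \<alpha> \<gamma>") auto
  interpret sewing_setting \<alpha> \<alpha>' \<eta> \<gamma> A G S W
    using \<open>0 < \<alpha>\<close> assms SG W by unfold_locales auto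
  have "1 \<le> 1 / \<eta>" using assms(4,5) by simp
  then have "1 \<le> p" using assms(6) by linarith
  moreover have "1 \<le> p * \<eta>" using assms(4,6) by (simp add: field_simps)
  moreover have "ereal (2 powr (\<alpha>' / \<alpha>) * zeta_real (\<alpha>' / \<alpha>)) * symm_norm \<alpha>' A
      * epowr (alpha_var \<alpha> \<gamma>) (\<alpha>' / \<alpha>) = ereal (sewing_const * W powr \<theta>)"
    using SG W by (simp add: epowr_ereal sewing_const_def \<theta>_def algebra_simps)
  ultimately show ?thesis using pvar_gammaA_le by simp
qed

end
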